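(* Assume (HN.1), (HN.2), (HO), (HI). Then for $i\in\{0,1\}$, almost surely, $$\lim_{n\to\infty}\frac1{\pi^n}\sum_{k\in\mathbb T_n^i\setminus\mathbb T_0}\varepsilon_k^2\delta_k=\sigma^2\frac{\pi}{\pi-1}Wz^i,\qquad \lim_{n\to\infty}\frac1{\pi^n}\sum_{k\in\mathbb T_n^i\setminus\mathbb T_0}\delta_{2k}\delta_{2k+1}\varepsilon_{2k}\varepsilon_{2k+1}=\rho\,p^{(i)}(1,1)\frac{\pi}{\pi-1}Wz^i.$$
   Context: Tree notation: individuals labelled by $\mathbb{T}=\mathbb{N}^*$, $k$ has daughters $2k$ (type 0) and $2k+1$ (type 1); $\mathbb{G}_n=\{2^n,\dots,2^{n+1}-1\}$, $\mathbb{T}_n=\bigcup_{\ell=0}^n\mathbb{G}_\ell$, $\mathbb{T}^0=\mathbb{T}\cap 2\mathbb{N}$, $\mathbb{T}^1=\mathbb{T}\cap(2\mathbb{N}+1)$, $\mathbb T_n^i=\mathbb T_n\cap\mathbb T^i$. BAR process: $\mathbb E[X_1^8]<\infty$ and for $k\ge1$, $X_{2k}=a+bX_k+\varepsilon_{2k}$, $X_{2k+1}=c+dX_k+\varepsilon_{2k+1}$, $(a,b,c,d)\in\mathbb R^4$, $0<\max(|b|,|d|)<1$; $\mathcal F_n=\sigma(X_k,k\in\mathbb T_n)$. (HN.1): for all $n\ge0$, $k\in\mathbb G_{n+1}$, $\varepsilon_k\in L^8$ and a.s. $\mathbb E[\varepsilon_k|\mathcal F_n]=0$, $\mathbb E[\varepsilon_k^2|\mathcal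 F_n]=\sigma^2$, $\mathbb E[\varepsilon_k^4|\mathcal F_n]=\tau^4$, $\mathbb E[\varepsilon_k^8|\mathcal F_n]=\kappa^8$ with $\sigma^2,\tau^4,\kappa^8\in(0,\infty)$; and for $k\in\mathbb G_n$, $\mathbb E[\varepsilon_{2k}\varepsilon_{2k+1}|\mathcal F_n]=\rho=\rho'\sigma^2$, $\mathbb E[\varepsilon_{2k}^2\varepsilon_{2k+1}^2|\mathcal F_n]=\nu^2\tau^4$, $\mathbb E[\varepsilon_{2k}^4\varepsilon_{2k+1}^4|\mathcal F_n]=\lambda^4\kappa^8$ with $|\rho'|,\nu^2,\lambda^4\in[0,1)$. (HN.2): for each $n\ge0$ the vectors $(\varepsilon_{2k},\varepsilon_{2k+1})$, $k\in\mathbb G_n$, are conditionally independent given $\mathcal F_n$. Observation process: $\delta_1=1$, $\delta_{2k}=\delta_k\zeta_k^0$, $\delta_{2k+1}=\delta_k\zeta_k^1$, with $\boldsymbol\zeta_k=(\zeta_k^0,\zeta_k^1)\in\{0,1\}^2$ independent, common law $p^{(0)}(j_0,j_1)=\mathbb P(\boldsymbol\zeta_k=(j_0,j_1))$ for even $k$ and $p^{(1)}$ for odd $k$; $p_{i0}=p^{(i)}(1,0)+p^{(i)}(1,1)$, $p_{i1}=p^{(i)}(0,1)+p^{(i)}(1,1)$, $\boldsymbol P=(p_{ij})$. (HO): all $p_{ij}>0$ and the Perron eigenvalue $\pi$ of $\boldsymbol P$ satisfies $\pi>1$; $\boldsymbol z=(z^0,z^1)$ is the positive left eigenvector for $\pi$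 with $z^0+z^1=1$. (HI): $(\delta_k)$, $(\boldsymbol\zeta_k)$ are independent of $(X_k)$, $(\varepsilon_k)$. With $Z_n^i=|\{k\in\mathbb G_n\cap\mathbb T^i:\delta_k=1\}|$, $W$ denotes the nonnegative random variable with $(Z_n^0,Z_n^1)/\pi^n\to W\boldsymbol z$ a.s. *)

theory Defs
  imports "HOL-Probability.Probability"
begin

text \<open>Generations and subtrees of the binary tree labelled by positive integers.\<close>

definition Gen :: "nat \<Rightarrow> nat set" where
  "Gen n = {2 ^ n ..< 2 ^ Suc n}"

definition Tr :: "nat \<Rightarrow> nat set" where
  "Tr n = (\<Union>l\<le>n. Gen l)"

definition Ty :: "nat \<Rightarrow> nat set" where
  "Ty i = {k. 1 \<le> k \<and> k mod 2 = i}"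

function delta :: "(nat \<Rightarrow> 'a \<Rightarrow> nat \<times> nat) \<Rightarrow> nat \<Rightarrow> 'a \<Rightarrow> nat" where
  "delta \<zeta> k \<omega> = (if k \<le> 1 then 1
     else delta \<zeta> (k div 2) \<omega> *
       (if even k then fst (\<zeta> (k div 2) \<omega>) else snd (\<zeta> (k div 2) \<omega>)))"
  by auto
termination by (relation "Wellfounded.measure (\<lambda>(_, k, _). k)") auto

declare delta.simps [simp del]

definition Zcount :: "(nat \<Rightarrow> 'a \<Rightarrow> nat \<times> nat) \<Rightarrow> nat \<Rightarrow> nat \<Rightarrow> 'a \<Rightarrow> nat" where
  "Zcount \<zeta> n i \<omega> = card {k \<in> Gen n \<inter> Ty i. delta \<zeta> k \<omega> = 1}"

definition natF :: "'a measure \<Rightarrow> (nat \<Rightarrow> 'a \<Rightarrow> real) \<Rightarrow> nat \<Rightarrow> 'a measure" where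
  "natF M X n = sigma (space M) {X k -` B \<inter> space M | k B. k \<in> Tr n \<and> B \<in> sets borel}"

definition gen_events :: "'a measure \<Rightarrow> 'b measure \<Rightarrow> ('a \<Rightarrow> 'b) \<Rightarrow> 'a set set" where
  "gen_events M N Y = {Y -` B \<inter> space M | B. B \<in> sets N}"

definition perron_eig :: "real \<Rightarrow> real \<Rightarrow> real \<Rightarrow> real \<Rightarrow> real" where
  "perron_eig p00 p01 p10 p11 = Max {x. (p00 - x) * (p11 - x) - p01 * p10 = 0}"

end

theory Submission
  imports Defs
begin

text \<open>
  Split \<open>\<epsilon>_k^2 \<delta>_k = \<sigma>^2 \<delta>_k + \<delta>_k (\<epsilon>_k^2 - \<sigma>^2)\<close> and
  \<open>\<delta>_2k \<delta>_2k+1 \<epsilon>_2k \<epsilon>_2k+1 = \<rho> p^(i)(1,1) \<delta>_k + \<rho> \<delta>_k (\<zeta>^0_k \<zeta>^1_k - p^(i)(1,1)) + \<delta>_k \<zeta>^0_k \<zeta>^1_k (\<epsilon>_2k \<epsilon>_2k+1 - \<rho>)\<close>.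
  The sums of \<open>\<delta>_k\<close> are cumulative sums of the counts \<open>Z_m^i\<close>, so \<open>Z_n^i / \<pi>^n \<longrightarrow> W z^i\<close> gives the
  main terms by a Toeplitz argument.  Every other sum is a sum of pairwise orthogonal centred
  variables with second moments \<open>O(E \<delta>_k)\<close>; as \<open>\<Sum> E \<delta>_k = O(\<pi>^n)\<close> (z is a left eigenvector of P),
  its second moment is \<open>O(\<pi>^n)\<close> and a Borel-Cantelli argument makes it \<open>o(\<pi>^n)\<close> almost surely.
\<close>

lemma indep_generated_integral:
  fixes F :: "'b \<Rightarrow> real" and G :: "'c \<Rightarrow> real"
  assumes P: "prob_space M"
    and indep: "prob_space.indep_set M (gen_events M N1 Y1) (gen_events M N2 Y2)"
    and [measurable]: "F \<in> borel_measurable N1" "G \<in> borel_measurable N2"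
      "Y1 \<in> measurable M N1" "Y2 \<in> measurable M N2"
    and iF: "integrable M (\<lambda>\<omega>. F (Y1 \<omega>))" and iG: "integrable M (\<lambda>\<omega>. G (Y2 \<omega>))"
  shows "(\<integral>\<omega>. F (Y1 \<omega>) * G (Y2 \<omega>) \<partial>M) = (\<integral>\<omega>. F (Y1 \<omega>) \<partial>M) * (\<integral>\<omega>. G (Y2 \<omega>) \<partial>M)"
proof -
  interpret prob_space M by (rule P)
  have stable: "Int_stable (gen_events M N Y)" for N and Y :: "'a \<Rightarrow> 'd"
    unfolding Int_stable_def gen_events_def
  proof clarify
    fix A B assume "A \<in> sets N" "B \<in> sets N"
    then show "\<exists>C. Y -` A \<inter> space M \<inter> (Y -` B \<inter> space M) = Y -` C \<inter> space M \<and> C \<in> sets N"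
      by (intro exI[of _ "A \<inter> B"]) auto
  qed
  have comp_sub: "{(\<lambda>\<omega>. H (Y \<omega>)) -` A \<inter> space M | A. A \<in> sets borel} \<subseteq> gen_events M N Y"
    if [measurable]: "H \<in> borel_measurable N" "Y \<in> measurable M N" for H :: "'d \<Rightarrow> real" and N Y
  proof clarify
    fix A :: "real set" assume [measurable]: "A \<in> sets borel"
    have "(\<lambda>\<omega>. H (Y \<omega>)) -` A \<inter> space M = Y -` (H -` A \<inter> space N) \<inter> space M"
      using measurable_space[OF that(2)] by auto
    moreover have "H -` A \<inter> space N \<in> sets N" by measurable
    ultimately show "(\<lambda>\<omega>. H (Y \<omega>)) -` A \<inter> space M \<in> gen_events M N Y"
      unfolding gen_events_def by blast
  qed
  have "indep_set (sigma_sets (space M) (gen_events M N1 Y1)) (sigma_sets (space M) (gen_events M N2 Y2))"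
    by (rule indep_set_sigma_sets[OF indep stable stable])
  then have "indep_var borel (\<lambda>\<omega>. F (Y1 \<omega>)) borel (\<lambda>\<omega>. G (Y2 \<omega>))"
    unfolding indep_var_eq indep_set_def
  proof (intro conjI)
    show "random_variable borel (\<lambda>\<omega>. F (Y1 \<omega>))" "random_variable borel (\<lambda>\<omega>. G (Y2 \<omega>))"
      by measurable
  qed (erule indep_sets_mono_sets,
       use sigma_sets_subseteq[OF comp_sub[of F N1 Y1]] sigma_sets_subseteq[OF comp_sub[of G N2 Y2]]
       in \<open>auto split: bool.split\<close>)
  then show ?thesis by (rule indep_var_lebesgue_integral[OF _ iF iG])
qed

text \<open>Two weights that give the same mass to every event \<open>{Y \<in> A}\<close> give the same integral to every
  nonnegative function of Y (uniqueness of the image measure).\<close>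

lemma nn_integral_comp_eq_by_indicators:
  fixes w1 w2 :: "'a \<Rightarrow> ennreal" and g :: "'b \<Rightarrow> ennreal"
  assumes [measurable]: "Y \<in> measurable M N" "w1 \<in> borel_measurable M" "w2 \<in> borel_measurable M"
    "g \<in> borel_measurable N"
    and eq: "\<And>A. A \<in> sets N \<Longrightarrow>
      (\<integral>\<^sup>+\<omega>. indicator A (Y \<omega>) * w1 \<omega> \<partial>M) = (\<integral>\<^sup>+\<omega>. indicator A (Y \<omega>) * w2 \<omega> \<partial>M)"
  shows "(\<integral>\<^sup>+\<omega>. g (Y \<omega>) * w1 \<omega> \<partial>M) = (\<integral>\<^sup>+\<omega>. g (Y \<omega>) * w2 \<omega> \<partial>M)"
proof -
  have image_measure: "emeasure (distr (density M w) N Y) A = (\<integral>\<^sup>+\<omega>. indicator A (Y \<omega>) * w \<omega> \<partial>M)"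
    if [measurable]: "w \<in> borel_measurable M" "A \<in> sets N" for w A
  proof -
    have "emeasure (distr (density M w) N Y) A = emeasure (density M w) (Y -` A \<inter> space M)"
      by (subst emeasure_distr) auto
    also have "\<dots> = (\<integral>\<^sup>+\<omega>. w \<omega> * indicator (Y -` A \<inter> space M) \<omega> \<partial>M)"
      by (subst emeasure_density) auto
    also have "\<dots> = (\<integral>\<^sup>+\<omega>. indicator A (Y \<omega>) * w \<omega> \<partial>M)"
      by (rule nn_integral_cong) (auto simp: indicator_def)
    finally show ?thesis .
  qed
  have "distr (density M w1) N Y = distr (density M w2) N Y"
    by (rule measure_eqI) (auto simp: image_measure eq)
  moreover have "(\<integral>\<^sup>+x. g x \<partial>distr (density M w) N Y) = (\<integral>\<^sup>+\<omega>. g (Y \<omega>) * w \<omega> \<partial>M)"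
    if [measurable]: "w \<in> borel_measurable M" for w
    by (subst nn_integral_distr) (auto simp: nn_integral_density mult.commute)
  ultimately show ?thesis using assms(2,3) by metis
qed

lemma integrable_mult_bounded_factor:
  fixes f g :: "'a \<Rightarrow> real"
  assumes "integrable M g" "f \<in> borel_measurable M" "AE \<omega> in M. \<bar>f \<omega>\<bar> \<le> 1"
  shows "integrable M (\<lambda>\<omega>. f \<omega> * g \<omega>)"
proof (rule Bochner_Integration.integrable_bound[OF assms(1)])
  show "(\<lambda>\<omega>. f \<omega> * g \<omega>) \<in> borel_measurable M"
    using assms(2) borel_measurable_integrable[OF assms(1)] by measurable
  show "AE \<omega> in M. norm (f \<omega> * g \<omega>) \<le> norm (g \<omega>)"
    using assms(3) by eventually_elim (auto simp: abs_mult intro: mult_left_le_one_le)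
qed

lemma (in finite_measure) integrable_bounded:
  fixes f :: "'a \<Rightarrow> real"
  shows "f \<in> borel_measurable M \<Longrightarrow> (\<And>\<omega>. \<omega> \<in> space M \<Longrightarrow> \<bar>f \<omega>\<bar> \<le> B) \<Longrightarrow> integrable M f"
  by (rule integrable_const_bound[where B = B]) auto

lemma integral_comp_eq_by_indicators:
  fixes w1 w2 :: "'a \<Rightarrow> real" and g :: "'b \<Rightarrow> real"
  assumes [measurable]: "Y \<in> measurable M N" "g \<in> borel_measurable N"
    and w: "integrable M w1" "integrable M w2" "AE \<omega> in M. 0 \<le> w1 \<omega>" "AE \<omega> in M. 0 \<le> w2 \<omega>"
    and g_nonneg: "\<And>x. 0 \<le> g x"
    and eq: "\<And>A. A \<in> sets N \<Longrightarrow>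
      (\<integral>\<omega>. indicator A (Y \<omega>) * w1 \<omega> \<partial>M) = (\<integral>\<omega>. indicator A (Y \<omega>) * w2 \<omega> \<partial>M)"
    and ig: "integrable M (\<lambda>\<omega>. g (Y \<omega>) * w1 \<omega>)" "integrable M (\<lambda>\<omega>. g (Y \<omega>) * w2 \<omega>)"
  shows "(\<integral>\<omega>. g (Y \<omega>) * w1 \<omega> \<partial>M) = (\<integral>\<omega>. g (Y \<omega>) * w2 \<omega> \<partial>M)"
proof -
  have to_nn: "(\<integral>\<^sup>+\<omega>. ennreal (u (Y \<omega>)) * ennreal (v \<omega>) \<partial>M) = ennreal (\<integral>\<omega>. u (Y \<omega>) * v \<omega> \<partial>M)"
    if "integrable M (\<lambda>\<omega>. u (Y \<omega>) * v \<omega>)" "AE \<omega> in M. 0 \<le> v \<omega>" "\<And>x. 0 \<le> u x" for u v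
  proof -
    have "(\<integral>\<^sup>+\<omega>. ennreal (u (Y \<omega>)) * ennreal (v \<omega>) \<partial>M) = (\<integral>\<^sup>+\<omega>. ennreal (u (Y \<omega>) * v \<omega>) \<partial>M)"
      by (rule nn_integral_cong) (simp add: ennreal_mult' that(3))
    also have "\<dots> = ennreal (\<integral>\<omega>. u (Y \<omega>) * v \<omega> \<partial>M)"
      by (rule nn_integral_eq_integral[OF that(1)]) (use that(2) in \<open>auto simp: that(3)\<close>)
    finally show ?thesis .
  qed
  have ind_int: "integrable M (\<lambda>\<omega>. indicator A (Y \<omega>) * v \<omega>)"
    if "A \<in> sets N" "integrable M v" for A and v :: "'a \<Rightarrow> real"
    using that by (intro integrable_mult_bounded_factor) auto
  have "(\<integral>\<^sup>+\<omega>. ennreal (g (Y \<omega>)) * ennreal (w1 \<omega>) \<partial>M) = (\<integral>\<^sup>+\<omega>. ennreal (g (Y \<omega>)) * ennreal (w2 \<omega>) \<partial>M)"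
  proof (rule nn_integral_comp_eq_by_indicators[where g = "\<lambda>x. ennreal (g x)" and N = N])
    fix A assume A: "A \<in> sets N"
    show "(\<integral>\<^sup>+\<omega>. indicator A (Y \<omega>) * ennreal (w1 \<omega>) \<partial>M) = (\<integral>\<^sup>+\<omega>. indicator A (Y \<omega>) * ennreal (w2 \<omega>) \<partial>M)"
      using to_nn[where u = "indicator A", OF ind_int[OF A w(1)] w(3)]
        to_nn[where u = "indicator A", OF ind_int[OF A w(2)] w(4)] eq[OF A]
      by (simp add: ennreal_indicator)
  qed (use borel_measurable_integrable[OF w(1)] borel_measurable_integrable[OF w(2)] in auto)
  then have "ennreal (\<integral>\<omega>. g (Y \<omega>) * w1 \<omega> \<partial>M) = ennreal (\<integral>\<omega>. g (Y \<omega>) * w2 \<omega> \<partial>M)"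
    using to_nn[OF ig(1) w(3) g_nonneg] to_nn[OF ig(2) w(4) g_nonneg] by simp
  moreover have "0 \<le> (\<integral>\<omega>. g (Y \<omega>) * w1 \<omega> \<partial>M)" "0 \<le> (\<integral>\<omega>. g (Y \<omega>) * w2 \<omega> \<partial>M)"
    using w(3,4) by (auto intro!: integral_nonneg_AE simp: g_nonneg)
  ultimately show ?thesis by simp
qed

text \<open>A signed integrable weight w orthogonal to all indicators \<open>1_A(Y)\<close> is orthogonal to every
  function \<open>g(Y)\<close> with \<open>g(Y) w\<close> integrable (split g and w into positive and negative parts).\<close>

lemma integral_comp_mult_eq_0:
  fixes w :: "'a \<Rightarrow> real" and g :: "'b \<Rightarrow> real"
  assumes [measurable]: "Y \<in> measurable M N" "g \<in> borel_measurable N"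
    and iw: "integrable M w" and igw: "integrable M (\<lambda>\<omega>. g (Y \<omega>) * w \<omega>)"
    and zero: "\<And>A. A \<in> sets N \<Longrightarrow> (\<integral>\<omega>. indicator A (Y \<omega>) * w \<omega> \<partial>M) = 0"
  shows "(\<integral>\<omega>. g (Y \<omega>) * w \<omega> \<partial>M) = 0"
proof -
  define wp wm where "wp \<omega> = max (w \<omega>) 0" and "wm \<omega> = max (- w \<omega>) 0" for \<omega>
  define gp gm where "gp x = max (g x) 0" and "gm x = max (- g x) 0" for x
  have [measurable]: "w \<in> borel_measurable M" using iw by auto
  have [measurable]: "gp \<in> borel_measurable N" "gm \<in> borel_measurable N"
    unfolding gp_def gm_def by auto
  have split_w: "w \<omega> = wp \<omega> - wm \<omega>" for \<omega> unfolding wp_def wm_def by auto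
  have split_g: "g x = gp x - gm x" for x unfolding gp_def gm_def by auto
  have nonneg: "0 \<le> wp \<omega>" "0 \<le> wm \<omega>" "0 \<le> gp x" "0 \<le> gm x" for \<omega> x
    unfolding wp_def wm_def gp_def gm_def by auto
  have iwpm: "integrable M wp" "integrable M wm"
    unfolding wp_def wm_def by (auto intro: Bochner_Integration.integrable_bound[OF iw])
  have iparts: "integrable M (\<lambda>\<omega>. g' (Y \<omega>) * w' \<omega>)"
    if "g' = gp \<or> g' = gm" "w' = wp \<or> w' = wm" for g' w'
  proof (rule Bochner_Integration.integrable_bound[OF igw])
    show "(\<lambda>\<omega>. g' (Y \<omega>) * w' \<omega>) \<in> borel_measurable M"
      using that unfolding wp_def wm_def by auto
    have "\<bar>g' x\<bar> \<le> \<bar>g x\<bar>" "\<bar>w' \<omega>\<bar> \<le> \<bar>w \<omega>\<bar>" for x \<omega>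
      using that by (auto simp: gp_def gm_def wp_def wm_def)
    then show "AE \<omega> in M. norm (g' (Y \<omega>) * w' \<omega>) \<le> norm (g (Y \<omega>) * w \<omega>)"
      unfolding real_norm_def abs_mult by (intro AE_I2 mult_mono) auto
  qed
  have balanced: "(\<integral>\<omega>. g' (Y \<omega>) * wp \<omega> \<partial>M) = (\<integral>\<omega>. g' (Y \<omega>) * wm \<omega> \<partial>M)"
    if g': "g' = gp \<or> g' = gm" for g'
  proof (rule integral_comp_eq_by_indicators[where N = N])
    fix A assume A[measurable]: "A \<in> sets N"
    have "0 = (\<integral>\<omega>. indicator A (Y \<omega>) * wp \<omega> - indicator A (Y \<omega>) * wm \<omega> \<partial>M)"
      using zero[OF A] by (simp add: split_w right_diff_distrib)
    also have "\<dots> = (\<integral>\<omega>. indicator A (Y \<omega>) * wp \<omega> \<partial>M) - (\<integral>\<omega>. indicator A (Y \<omega>) * wm \<omega> \<partial>M)"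
      using iwpm by (intro Bochner_Integration.integral_diff integrable_mult_bounded_factor) auto
    finally show "(\<integral>\<omega>. indicator A (Y \<omega>) * wp \<omega> \<partial>M) = (\<integral>\<omega>. indicator A (Y \<omega>) * wm \<omega> \<partial>M)"
      by simp
  qed (use g' iwpm iparts nonneg in auto)
  have "(\<integral>\<omega>. g (Y \<omega>) * w \<omega> \<partial>M)
      = ((\<integral>\<omega>. gp (Y \<omega>) * wp \<omega> \<partial>M) - (\<integral>\<omega>. gp (Y \<omega>) * wm \<omega> \<partial>M))
      - ((\<integral>\<omega>. gm (Y \<omega>) * wp \<omega> \<partial>M) - (\<integral>\<omega>. gm (Y \<omega>) * wm \<omega> \<partial>M))"
    unfolding split_g[of "Y _"] split_w[of _]
    using iparts by (simp add: algebra_simps)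
  then show ?thesis using balanced[of gp] balanced[of gm] by simp
qed

lemma cond_exp_unit_interval:
  fixes f :: "'a \<Rightarrow> real"
  assumes "prob_space M" "sigma_finite_subalgebra M F"
    and [measurable]: "f \<in> borel_measurable M" and range: "\<And>x. x \<in> space M \<Longrightarrow> 0 \<le> f x \<and> f x \<le> 1"
  shows "AE x in M. 0 \<le> real_cond_exp M F f x \<and> real_cond_exp M F f x \<le> 1"
proof -
  interpret prob_space M by fact
  interpret sigma_finite_subalgebra M F by fact
  have "integrable M f"
    using range by (intro integrable_const_bound[where B = 1]) auto
  then have "AE x in M. real_cond_exp M F f x \<le> real_cond_exp M F (\<lambda>_. 1) x"
    using range by (intro real_cond_exp_mono) auto
  moreover have "AE x in M. real_cond_exp M F (\<lambda>_. 1) x = 1"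
    by (rule real_cond_exp_F_meas) auto
  moreover have "AE x in M. 0 \<le> real_cond_exp M F f x"
    using range by (intro real_cond_exp_pos) auto
  ultimately show ?thesis by eventually_elim auto
qed

context
  fixes M :: "'a measure" and F and P Q :: "'a \<Rightarrow> real \<times> real"
  assumes prob: "prob_space M" and sigma_finite_F: "sigma_finite_subalgebra M F"
    and mP[measurable]: "P \<in> borel_measurable M" and mQ[measurable]: "Q \<in> borel_measurable M"
    and cind: "\<And>A B. A \<in> sets borel \<Longrightarrow> B \<in> sets borel \<Longrightarrow> AE \<omega> in M.
      real_cond_exp M F (\<lambda>\<omega>. indicator A (P \<omega>) * indicator B (Q \<omega>)) \<omega>
      = real_cond_exp M F (\<lambda>\<omega>. indicator A (P \<omega>)) \<omega> * real_cond_exp M F (\<lambda>\<omega>. indicator B (Q \<omega>)) \<omega>"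
begin

interpretation prob_space M by (rule prob)
interpretation sigma_finite_subalgebra M F by (rule sigma_finite_F)

lemma integrable_indicator_comp:
  "A \<in> sets borel \<Longrightarrow> R \<in> borel_measurable M \<Longrightarrow> integrable M (\<lambda>\<omega>. indicator A (R \<omega>) :: real)"
  by (intro integrable_const_bound[where B = 1]) auto

lemma cond_prob_unit_interval:
  "B \<in> sets borel \<Longrightarrow> AE \<omega> in M. 0 \<le> real_cond_exp M F (\<lambda>\<omega>. indicator B (Q \<omega>)) \<omega>
    \<and> real_cond_exp M F (\<lambda>\<omega>. indicator B (Q \<omega>)) \<omega> \<le> 1"
  by (rule cond_exp_unit_interval[OF prob sigma_finite_F]) auto

lemma cond_indep_indicator_integral:
  assumes A[measurable]: "A \<in> sets borel" and B[measurable]: "B \<in> sets borel"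
  shows "(\<integral>\<omega>. indicator A (P \<omega>) * indicator B (Q \<omega>) \<partial>M)
    = (\<integral>\<omega>. indicator A (P \<omega>) * real_cond_exp M F (\<lambda>\<omega>. indicator B (Q \<omega>)) \<omega> \<partial>M)"
proof -
  let ?pB = "real_cond_exp M F (\<lambda>\<omega>. indicator B (Q \<omega>))"
  have pB_abs: "AE \<omega> in M. \<bar>?pB \<omega>\<bar> \<le> 1"
    using cond_prob_unit_interval[OF B] by eventually_elim auto
  have "(\<integral>\<omega>. indicator A (P \<omega>) * indicator B (Q \<omega>) \<partial>M)
      = (\<integral>\<omega>. real_cond_exp M F (\<lambda>\<omega>. indicator A (P \<omega>) * indicator B (Q \<omega>)) \<omega> \<partial>M)"
    by (rule real_cond_exp_int(2)[symmetric],
        rule integrable_mult_bounded_factor[OF integrable_indicator_comp[OF B mQ]]) auto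
  also have "\<dots> = (\<integral>\<omega>. ?pB \<omega> * real_cond_exp M F (\<lambda>\<omega>. indicator A (P \<omega>)) \<omega> \<partial>M)"
    by (rule integral_cong_AE) (use cind[OF A B] in \<open>auto simp: mult.commute\<close>)
  also have "\<dots> = (\<integral>\<omega>. ?pB \<omega> * indicator A (P \<omega>) \<partial>M)"
    by (rule real_cond_exp_intg(2))
      (use integrable_mult_bounded_factor[OF integrable_indicator_comp[OF A mP] _ pB_abs] in
        \<open>auto simp: mult.commute\<close>)
  finally show ?thesis by (simp add: mult.commute)
qed

text \<open>For a fixed event B of Q, the weight \<open>1_B(Q) - P(Q \<in> B | F)\<close> is orthogonal to every
  \<open>1_A(P)\<close>, hence to f(P); and f(P) is orthogonal to the F-measurable \<open>P(Q \<in> B | F)\<close>.\<close>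

lemma cond_indep_event_orthogonal:
  fixes f :: "real \<times> real \<Rightarrow> real"
  assumes [measurable]: "f \<in> borel_measurable borel" and iF: "integrable M (\<lambda>\<omega>. f (P \<omega>))"
    and centered: "AE \<omega> in M. real_cond_exp M F (\<lambda>\<omega>. f (P \<omega>)) \<omega> = 0"
    and B[measurable]: "B \<in> sets borel"
  shows "(\<integral>\<omega>. indicator B (Q \<omega>) * f (P \<omega>) \<partial>M) = 0"
proof -
  define pB where "pB = real_cond_exp M F (\<lambda>\<omega>. indicator B (Q \<omega>))"
  define w where "w \<omega> = indicator B (Q \<omega>) - pB \<omega>" for \<omega>
  have [measurable]: "pB \<in> borel_measurable M" "pB \<in> borel_measurable F" unfolding pB_def by auto
  have pB_abs: "AE \<omega> in M. \<bar>pB \<omega>\<bar> \<le> 1" and w_abs: "AE \<omega> in M. \<bar>w \<omega>\<bar> \<le> 1"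
    using cond_prob_unit_interval[OF B] unfolding pB_def[symmetric]
    by (eventually_elim, auto simp: w_def indicator_def)+
  have i_pB: "integrable M (\<lambda>\<omega>. f (P \<omega>) * pB \<omega>)" "integrable M (\<lambda>\<omega>. pB \<omega> * f (P \<omega>))"
    using integrable_mult_bounded_factor[OF iF _ pB_abs] by (simp_all add: mult.commute)
  have "(\<integral>\<omega>. f (P \<omega>) * w \<omega> \<partial>M) = 0"
  proof (rule integral_comp_mult_eq_0[where N = borel and Y = P and g = f])
    show "integrable M w"
      unfolding w_def pB_def using integrable_indicator_comp[OF B mQ] by auto
    show "integrable M (\<lambda>\<omega>. f (P \<omega>) * w \<omega>)"
      using integrable_mult_bounded_factor[OF iF _ w_abs] by (simp add: w_def mult.commute)
    fix A :: "(real \<times> real) set" assume A[measurable]: "A \<in> sets borel"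
    show "(\<integral>\<omega>. indicator A (P \<omega>) * w \<omega> \<partial>M) = 0"
      unfolding w_def using cond_indep_indicator_integral[OF A B]
        integrable_mult_bounded_factor[OF integrable_indicator_comp[OF B mQ], of "\<lambda>\<omega>. indicator A (P \<omega>)"]
        integrable_mult_bounded_factor[OF integrable_indicator_comp[OF A mP] _ pB_abs]
      by (simp add: right_diff_distrib mult.commute pB_def)
  qed auto
  moreover have "(\<integral>\<omega>. pB \<omega> * f (P \<omega>) \<partial>M) = 0"
  proof -
    have "(\<integral>\<omega>. pB \<omega> * f (P \<omega>) \<partial>M) = (\<integral>\<omega>. pB \<omega> * real_cond_exp M F (\<lambda>\<omega>. f (P \<omega>)) \<omega> \<partial>M)"
      by (rule real_cond_exp_intg(2)[symmetric]) (use i_pB in auto)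
    also have "\<dots> = 0"
      using centered by (subst integral_cong_AE[where g = "\<lambda>_. 0"]) auto
    finally show ?thesis .
  qed
  ultimately show ?thesis
    using integrable_mult_bounded_factor[OF iF, of "\<lambda>\<omega>. indicator B (Q \<omega>)"] i_pB
    by (simp add: w_def right_diff_distrib mult.commute)
qed

lemma cond_indep_orthogonal:
  fixes f h :: "real \<times> real \<Rightarrow> real"
  assumes [measurable]: "f \<in> borel_measurable borel" "h \<in> borel_measurable borel"
    and iF: "integrable M (\<lambda>\<omega>. f (P \<omega>))"
    and centered: "AE \<omega> in M. real_cond_exp M F (\<lambda>\<omega>. f (P \<omega>)) \<omega> = 0"
    and iFH: "integrable M (\<lambda>\<omega>. f (P \<omega>) * h (Q \<omega>))"
  shows "(\<integral>\<omega>. f (P \<omega>) * h (Q \<omega>) \<partial>M) = 0"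
proof -
  have "(\<integral>\<omega>. h (Q \<omega>) * f (P \<omega>) \<partial>M) = 0"
    by (rule integral_comp_mult_eq_0[where N = borel and Y = Q and g = h, OF _ _ iF])
      (use iFH cond_indep_event_orthogonal[OF _ iF centered] in \<open>auto simp: mult.commute\<close>)
  then show ?thesis by (simp add: mult.commute)
qed

end

lemma abs_mult_le_sq: "\<bar>x * y :: real\<bar> \<le> (x\<^sup>2 + y\<^sup>2) / 2"
proof -
  have "0 \<le> (\<bar>x\<bar> - \<bar>y\<bar>)\<^sup>2" by simp
  then show ?thesis by (simp add: power2_eq_square algebra_simps abs_mult)
qed

lemma abs_mult4_le: "\<bar>a * b * c * d :: real\<bar> \<le> a ^ 4 + b ^ 4 + c ^ 4 + d ^ 4"
proof -
  have "\<bar>a * b * c * d\<bar> = \<bar>a * b\<bar> * \<bar>c * d\<bar>" by (simp add: abs_mult)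
  also have "\<dots> \<le> ((a\<^sup>2 + b\<^sup>2) / 2) * ((c\<^sup>2 + d\<^sup>2) / 2)"
    using abs_mult_le_sq[of a b] abs_mult_le_sq[of c d] by (intro mult_mono) auto
  also have "\<dots> = \<bar>(a\<^sup>2 + b\<^sup>2) * (c\<^sup>2 + d\<^sup>2)\<bar> / 4" by simp
  also have "\<dots> \<le> ((a\<^sup>2 + b\<^sup>2)\<^sup>2 + (c\<^sup>2 + d\<^sup>2)\<^sup>2) / 2 / 4"
    using abs_mult_le_sq[of "a\<^sup>2 + b\<^sup>2" "c\<^sup>2 + d\<^sup>2"] by simp
  also have "(a\<^sup>2 + b\<^sup>2)\<^sup>2 \<le> 2 * (a ^ 4 + b ^ 4)"
    using abs_mult_le_sq[of "a\<^sup>2" "b\<^sup>2"] by (simp add: power2_sum power_mult[symmetric] abs_mult)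
  also have "(c\<^sup>2 + d\<^sup>2)\<^sup>2 \<le> 2 * (c ^ 4 + d ^ 4)"
    using abs_mult_le_sq[of "c\<^sup>2" "d\<^sup>2"] by (simp add: power2_sum power_mult[symmetric] abs_mult)
  finally show ?thesis by (simp add: divide_right_mono)
qed

lemma integral_square_orthogonal_sum:
  fixes U :: "nat \<Rightarrow> 'a \<Rightarrow> real"
  assumes "finite K"
    and iU: "\<And>k l. k \<in> K \<Longrightarrow> l \<in> K \<Longrightarrow> integrable M (\<lambda>\<omega>. U k \<omega> * U l \<omega>)"
    and orth: "\<And>k l. k \<in> K \<Longrightarrow> l \<in> K \<Longrightarrow> k \<noteq> l \<Longrightarrow> (\<integral>\<omega>. U k \<omega> * U l \<omega> \<partial>M) = 0"
  shows "integrable M (\<lambda>\<omega>. (\<Sum>k\<in>K. U k \<omega>)\<^sup>2)"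
    and "(\<integral>\<omega>. (\<Sum>k\<in>K. U k \<omega>)\<^sup>2 \<partial>M) = (\<Sum>k\<in>K. \<integral>\<omega>. (U k \<omega>)\<^sup>2 \<partial>M)"
proof -
  have square: "(\<Sum>k\<in>K. U k \<omega>)\<^sup>2 = (\<Sum>k\<in>K. \<Sum>l\<in>K. U k \<omega> * U l \<omega>)" for \<omega>
    by (simp add: power2_eq_square sum_product)
  show "integrable M (\<lambda>\<omega>. (\<Sum>k\<in>K. U k \<omega>)\<^sup>2)"
    unfolding square by (intro Bochner_Integration.integrable_sum iU)
  have "(\<integral>\<omega>. (\<Sum>k\<in>K. U k \<omega>)\<^sup>2 \<partial>M) = (\<Sum>k\<in>K. \<Sum>l\<in>K. \<integral>\<omega>. U k \<omega> * U l \<omega> \<partial>M)"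
    unfolding square
    by (subst Bochner_Integration.integral_sum)
      (auto intro!: Bochner_Integration.integrable_sum iU sum.cong Bochner_Integration.integral_sum)
  also have "\<dots> = (\<Sum>k\<in>K. \<Sum>l\<in>K. if l = k then \<integral>\<omega>. (U k \<omega>)\<^sup>2 \<partial>M else 0)"
    by (intro sum.cong refl) (auto simp: orth power2_eq_square)
  also have "\<dots> = (\<Sum>k\<in>K. \<integral>\<omega>. (U k \<omega>)\<^sup>2 \<partial>M)"
    using assms(1) by (simp add: sum.delta)
  finally show "(\<integral>\<omega>. (\<Sum>k\<in>K. U k \<omega>)\<^sup>2 \<partial>M) = (\<Sum>k\<in>K. \<integral>\<omega>. (U k \<omega>)\<^sup>2 \<partial>M)" .
qed

lemma AE_tendsto_zero_summable_integrals:
  fixes g :: "nat \<Rightarrow> 'a \<Rightarrow> real"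
  assumes [measurable]: "\<And>n. g n \<in> borel_measurable M"
    and nonneg: "\<And>n \<omega>. 0 \<le> g n \<omega>" and ig: "\<And>n. integrable M (g n)"
    and summable: "summable (\<lambda>n. \<integral>\<omega>. g n \<omega> \<partial>M)"
  shows "AE \<omega> in M. (\<lambda>n. g n \<omega>) \<longlonglongrightarrow> 0"
proof -
  have "(\<integral>\<^sup>+\<omega>. (\<Sum>n. ennreal (g n \<omega>)) \<partial>M) = (\<Sum>n. \<integral>\<^sup>+\<omega>. ennreal (g n \<omega>) \<partial>M)"
    by (rule nn_integral_suminf) measurable
  also have "\<dots> = (\<Sum>n. ennreal (\<integral>\<omega>. g n \<omega> \<partial>M))"
    by (rule suminf_cong, rule nn_integral_eq_integral[OF ig]) (simp add: nonneg)
  also have "\<dots> \<noteq> \<infinity>"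
  proof -
    have "0 \<le> (\<integral>\<omega>. g n \<omega> \<partial>M)" for n by (rule integral_nonneg_AE) (simp add: nonneg)
    then show ?thesis unfolding infinity_ennreal_def by (rule ennreal_suminf_neq_top[OF summable])
  qed
  finally have "AE \<omega> in M. (\<Sum>n. ennreal (g n \<omega>)) \<noteq> \<infinity>"
    by (intro nn_integral_noteq_infinite) measurable
  then show ?thesis
  proof eventually_elim
    fix \<omega> assume "(\<Sum>n. ennreal (g n \<omega>)) \<noteq> \<infinity>"
    then have "summable (\<lambda>n. g n \<omega>)" using summable_suminf_not_top[OF nonneg] by simp
    then show "(\<lambda>n. g n \<omega>) \<longlonglongrightarrow> 0" by (rule summable_LIMSEQ_zero)
  qed
qed

lemma AE_tendsto_zero_of_L2_bound:
  fixes Y :: "nat \<Rightarrow> 'a \<Rightarrow> real"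
  assumes [measurable]: "\<And>n. Y n \<in> borel_measurable M"
    and iY: "\<And>n. integrable M (\<lambda>\<omega>. (Y n \<omega>)\<^sup>2)"
    and bound: "\<And>n. (\<integral>\<omega>. (Y n \<omega>)\<^sup>2 \<partial>M) \<le> C * q ^ n"
    and q: "q > 1"
  shows "AE \<omega> in M. (\<lambda>n. Y n \<omega> / q ^ n) \<longlonglongrightarrow> 0"
proof -
  define g where "g n \<omega> = (Y n \<omega> / q ^ n)\<^sup>2" for n \<omega>
  have ig: "integrable M (g n)" for n
    unfolding g_def using iY[of n] by (simp add: power_divide)
  have g_le: "(\<integral>\<omega>. g n \<omega> \<partial>M) \<le> \<bar>C\<bar> * (1 / q) ^ n" for n
  proof -
    have "(\<integral>\<omega>. g n \<omega> \<partial>M) = (\<integral>\<omega>. (Y n \<omega>)\<^sup>2 \<partial>M) / (q ^ n)\<^sup>2"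
      unfolding g_def by (simp add: power_divide)
    also have "\<dots> \<le> C * q ^ n / (q ^ n)\<^sup>2"
      using q by (intro divide_right_mono bound) auto
    also have "\<dots> = C * (1 / q) ^ n"
      using q by (simp add: power2_eq_square power_one_over field_simps)
    also have "\<dots> \<le> \<bar>C\<bar> * (1 / q) ^ n"
      using q by (intro mult_right_mono) auto
    finally show ?thesis .
  qed
  have "summable (\<lambda>n. \<bar>C\<bar> * (1 / q) ^ n)"
    using q by (intro summable_mult summable_geometric) auto
  moreover have "norm (\<integral>\<omega>. g n \<omega> \<partial>M) \<le> \<bar>C\<bar> * (1 / q) ^ n" for n
  proof -
    have "0 \<le> (\<integral>\<omega>. g n \<omega> \<partial>M)" by (rule integral_nonneg_AE) (simp add: g_def)
    then show ?thesis using g_le[of n] by simp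
  qed
  ultimately have "summable (\<lambda>n. \<integral>\<omega>. g n \<omega> \<partial>M)"
    by (rule summable_comparison_test'[where N = 0])
  then have "AE \<omega> in M. (\<lambda>n. g n \<omega>) \<longlonglongrightarrow> 0"
    by (intro AE_tendsto_zero_summable_integrals ig) (auto simp: g_def)
  then show ?thesis
  proof eventually_elim
    fix \<omega> assume "(\<lambda>n. g n \<omega>) \<longlonglongrightarrow> 0"
    then have "(\<lambda>n. sqrt (g n \<omega>)) \<longlonglongrightarrow> sqrt 0" by (intro tendsto_intros)
    then have "(\<lambda>n. \<bar>Y n \<omega> / q ^ n\<bar>) \<longlonglongrightarrow> 0" by (simp add: g_def)
    then show "(\<lambda>n. Y n \<omega> / q ^ n) \<longlonglongrightarrow> 0" by (rule tendsto_rabs_zero_cancel)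
  qed
qed

lemma perturbed_contraction_tendsto_zero:
  fixes w e :: "nat \<Rightarrow> real" and r :: real
  assumes r: "0 \<le> r" "r < 1" and rec: "\<And>n. \<bar>w (Suc n)\<bar> \<le> r * \<bar>w n\<bar> + \<bar>e n\<bar>"
    and e: "e \<longlonglongrightarrow> 0"
  shows "w \<longlonglongrightarrow> 0"
proof (rule LIMSEQ_I)
  fix \<epsilon> :: real assume \<epsilon>: "0 < \<epsilon>"
  have "0 < \<epsilon> * (1 - r) / 2" using \<epsilon> r by simp
  from LIMSEQ_D[OF e this] obtain N where N0: "\<forall>n\<ge>N. norm (e n - 0) < \<epsilon> * (1 - r) / 2" by blast
  have N: "\<And>n. n \<ge> N \<Longrightarrow> norm (e n) < \<epsilon> * (1 - r) / 2" using N0 by simp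
  have bound: "\<bar>w (N + k)\<bar> \<le> r ^ k * \<bar>w N\<bar> + \<epsilon> / 2" for k
  proof (induction k)
    case 0 then show ?case using \<epsilon> by simp
  next
    case (Suc k)
    have "\<bar>w (N + Suc k)\<bar> \<le> r * \<bar>w (N + k)\<bar> + \<bar>e (N + k)\<bar>" using rec[of "N + k"] by simp
    also have "\<dots> \<le> r * (r ^ k * \<bar>w N\<bar> + \<epsilon> / 2) + \<epsilon> * (1 - r) / 2"
      using Suc N[of "N + k"] r by (intro add_mono mult_left_mono) auto
    also have "\<dots> = r ^ Suc k * \<bar>w N\<bar> + \<epsilon> / 2" by (simp add: field_simps)
    finally show ?case .
  qed
  have "(\<lambda>k. r ^ k * \<bar>w N\<bar>) \<longlonglongrightarrow> 0 * \<bar>w N\<bar>" using r by (intro tendsto_intros LIMSEQ_power_zero) auto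
  then have "(\<lambda>k. r ^ k * \<bar>w N\<bar>) \<longlonglongrightarrow> 0" by simp
  moreover have "0 < \<epsilon> / 2" using \<epsilon> by simp
  ultimately obtain K where K0: "\<forall>k\<ge>K. norm (r ^ k * \<bar>w N\<bar> - 0) < \<epsilon> / 2"
    using LIMSEQ_D by blast
  have K: "\<And>k. k \<ge> K \<Longrightarrow> norm (r ^ k * \<bar>w N\<bar>) < \<epsilon> / 2" using K0 by simp
  show "\<exists>n0. \<forall>n\<ge>n0. norm (w n - 0) < \<epsilon>"
  proof (intro exI allI impI)
    fix n assume n: "N + K \<le> n"
    define k where "k = n - N"
    have k: "n = N + k" "K \<le> k" using n unfolding k_def by arith+
    have "\<bar>w n\<bar> \<le> r ^ k * \<bar>w N\<bar> + \<epsilon> / 2" using bound k by simp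
    also have "\<dots> < \<epsilon> / 2 + \<epsilon> / 2" using K[OF k(2)] r by simp
    finally show "norm (w n - 0) < \<epsilon>" by simp
  qed
qed

lemma geometric_partial_sums_limit:
  fixes a :: "nat \<Rightarrow> real"
  assumes q: "q > 1" and c: "(\<lambda>m. a m / q ^ m) \<longlonglongrightarrow> L"
  shows "(\<lambda>n. (\<Sum>m<n. a (Suc m)) / q ^ n) \<longlonglongrightarrow> L * (q / (q - 1))"
proof -
  define u where "u n = (\<Sum>m<n. a (Suc m)) / q ^ n" for n
  define Ls where "Ls = L * (q / (q - 1))"
  define w where "w n = u n - Ls" for n
  define e where "e n = a (Suc n) / q ^ Suc n - L" for n
  have e: "e \<longlonglongrightarrow> 0"
  proof -
    have "(\<lambda>n. a (Suc n) / q ^ Suc n) \<longlonglongrightarrow> L" using LIMSEQ_Suc[OF c] .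
    then have "(\<lambda>n. a (Suc n) / q ^ Suc n - L) \<longlonglongrightarrow> L - L" by (intro tendsto_intros)
    moreover have "e = (\<lambda>n. a (Suc n) / q ^ Suc n - L)" by (simp add: e_def fun_eq_iff)
    ultimately show ?thesis by simp
  qed
  have wrec: "w (Suc n) = (1 / q) * w n + e n" for n
  proof -
    have "u (Suc n) = u n / q + a (Suc n) / q ^ Suc n"
      unfolding u_def using q by (simp add: field_simps)
    moreover have "Ls = Ls / q + L" unfolding Ls_def using q by (simp add: field_simps)
    ultimately have "w (Suc n) = u n / q + a (Suc n) / q ^ Suc n - (Ls / q + L)"
      unfolding w_def by simp
    also have "\<dots> = (1 / q) * w n + e n" unfolding w_def e_def by (simp add: diff_divide_distrib)
    finally show ?thesis .
  qed
  have "w \<longlonglongrightarrow> 0"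
  proof (rule perturbed_contraction_tendsto_zero[where r="1 / q" and e=e])
    show "0 \<le> 1 / q" "1 / q < 1" using q by auto
    fix n show "\<bar>w (Suc n)\<bar> \<le> 1 / q * \<bar>w n\<bar> + \<bar>e n\<bar>"
      unfolding wrec using abs_triangle_ineq[of "w n / q" "e n"] q by (simp add: abs_divide)
  qed (rule e)
  then have "(\<lambda>n. w n + Ls) \<longlonglongrightarrow> 0 + Ls" by (intro tendsto_intros)
  then show ?thesis unfolding w_def u_def Ls_def by simp
qed

lemma Tr_Suc: "Tr (Suc n) = Tr n \<union> Gen (Suc n)"
  unfolding Tr_def atMost_Suc by auto

lemma Tr_eq: "Tr n = {1..<2 ^ Suc n}"
proof (induction n)
  case 0
  show ?case by (simp add: Tr_def Gen_def)
next
  case (Suc n)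
  have "Tr (Suc n) = {1..<2 ^ Suc n} \<union> {2 ^ Suc n..<2 ^ Suc (Suc n)}"
    by (simp only: Tr_Suc Suc Gen_def)
  also have "\<dots> = {1..<2 ^ Suc (Suc n)}"
    by (rule ivl_disj_un_two(3)) (simp_all only: one_le_power power_increasing)
  finally show ?case .
qed

lemma finite_Gen [simp]: "finite (Gen m)"
  by (simp add: Gen_def)

lemma Gen_ge1: "k \<in> Gen m \<Longrightarrow> 1 \<le> k"
  unfolding Gen_def by (auto intro: order.trans[OF one_le_power])

lemma Gen_Suc_ge2: "k \<in> Gen (Suc m) \<Longrightarrow> 2 \<le> k"
proof -
  assume "k \<in> Gen (Suc m)"
  then have "2 ^ Suc m \<le> k" by (simp add: Gen_def)
  moreover have "2 \<le> (2::nat) ^ Suc m" using power_increasing[of 1 "Suc m" "2::nat"] by simp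
  ultimately show ?thesis by linarith
qed

lemma Gen_sub_Tr: "m \<le> n \<Longrightarrow> Gen m \<subseteq> Tr n"
  by (auto simp: Tr_def)

lemma Gen_children: "k \<in> Gen m \<Longrightarrow> 2 * k \<in> Gen (Suc m) \<and> 2 * k + 1 \<in> Gen (Suc m)"
  unfolding Gen_def by auto

lemma Gen_parent: "k \<in> Gen (Suc m) \<Longrightarrow> k div 2 \<in> Gen m"
  unfolding Gen_def by auto

lemma in_Gen_Suc: "2 \<le> k \<Longrightarrow> \<exists>m. k \<in> Gen (Suc m)"
proof -
  assume k: "2 \<le> k"
  have "k < 2 ^ k" by (rule less_exp)
  then have "k < 2 ^ Suc k" unfolding power_Suc by linarith
  then have "k \<in> Tr k" using k by (simp add: Tr_eq)
  then obtain m where m: "k \<in> Gen m" unfolding Tr_def by blast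
  moreover have "m \<noteq> 0"
  proof
    assume "m = 0"
    then show False using k m by (simp add: Gen_def)
  qed
  ultimately show ?thesis by (cases m) auto
qed

lemma Gen_Suc_Ty: "j \<le> 1 \<Longrightarrow> Gen (Suc m) \<inter> Ty j = (\<lambda>k. 2 * k + j) ` Gen m"
proof safe
  fix k assume "j \<le> 1" "k \<in> Gen (Suc m)" "k \<in> Ty j"
  then have "k = 2 * (k div 2) + j" "k div 2 \<in> Gen m"
    by (auto simp: Ty_def Gen_parent)
  then show "k \<in> (\<lambda>k. 2 * k + j) ` Gen m" by blast
next
  fix k assume j: "j \<le> 1" and k: "k \<in> Gen m"
  then have "j = 0 \<or> j = 1" by auto
  then show "2 * k + j \<in> Gen (Suc m)" using Gen_children[OF k] by auto
  show "2 * k + j \<in> Ty j" using j Gen_ge1[OF k] by (auto simp: Ty_def)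
qed

text \<open>The index set \<open>T_n^i \ T_0\<close> of the sums in the theorem; it grows by one generation
  at a time, which turns sums over it into sums over generations.\<close>

definition Tr_nonroot :: "nat \<Rightarrow> nat \<Rightarrow> nat set" where
  "Tr_nonroot i n = Tr n \<inter> Ty i - Tr 0"

lemma Tr_nonroot_0: "Tr_nonroot i 0 = {}"
  by (simp add: Tr_nonroot_def)

lemma Tr_nonroot_Suc: "Tr_nonroot i (Suc n) = Tr_nonroot i n \<union> (Gen (Suc n) \<inter> Ty i)"
  and Tr_nonroot_disjoint: "Tr_nonroot i n \<inter> (Gen (Suc n) \<inter> Ty i) = {}"
proof -
  have "(2::nat) \<le> 2 ^ Suc n" by simp
  then have "Gen (Suc n) \<inter> Tr 0 = {}" "Gen (Suc n) \<inter> Tr n = {}"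
    unfolding Tr_eq Gen_def by auto
  then show "Tr_nonroot i (Suc n) = Tr_nonroot i n \<union> (Gen (Suc n) \<inter> Ty i)"
    "Tr_nonroot i n \<inter> (Gen (Suc n) \<inter> Ty i) = {}"
    unfolding Tr_nonroot_def Tr_Suc by blast+
qed

lemma finite_Tr_nonroot [simp]: "finite (Tr_nonroot i n)"
  by (simp add: Tr_nonroot_def Tr_eq)

lemma Tr_nonroot_Ty: "k \<in> Tr_nonroot i n \<Longrightarrow> k \<in> Ty i"
  by (simp add: Tr_nonroot_def)

lemma Tr_nonroot_ge2: "k \<in> Tr_nonroot i n \<Longrightarrow> 2 \<le> k"
  by (auto simp: Tr_nonroot_def Tr_eq)

lemma sum_Tr_nonroot: "(\<Sum>k\<in>Tr_nonroot i n. f k) = (\<Sum>m<n. \<Sum>k\<in>Gen (Suc m) \<inter> Ty i. f k)"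
  by (induction n) (simp_all add: Tr_nonroot_0 Tr_nonroot_Suc sum.union_disjoint Tr_nonroot_disjoint)

lemma delta_1: "delta \<zeta> 1 \<omega> = 1"
  by (subst delta.simps) simp

lemma delta_even: "1 \<le> k \<Longrightarrow> delta \<zeta> (2 * k) \<omega> = delta \<zeta> k \<omega> * fst (\<zeta> k \<omega>)"
  by (subst delta.simps) auto

lemma delta_odd: "1 \<le> k \<Longrightarrow> delta \<zeta> (2 * k + 1) \<omega> = delta \<zeta> k \<omega> * snd (\<zeta> k \<omega>)"
  by (subst delta.simps) auto

lemma delta_local:
  "(\<And>j. 1 \<le> j \<Longrightarrow> j < k \<Longrightarrow> \<zeta>1 j \<omega>1 = \<zeta>2 j \<omega>2) \<Longrightarrow> delta \<zeta>1 k \<omega>1 = delta \<zeta>2 k \<omega>2"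
proof (induction k rule: less_induct)
  case (less k)
  show ?case
  proof (cases "k \<le> 1")
    case True
    then show ?thesis by (subst (1 2) delta.simps) simp
  next
    case False
    then have "1 \<le> k div 2" "k div 2 < k" by auto
    then have "delta \<zeta>1 (k div 2) \<omega>1 = delta \<zeta>2 (k div 2) \<omega>2" "\<zeta>1 (k div 2) \<omega>1 = \<zeta>2 (k div 2) \<omega>2"
      using less by auto
    then show ?thesis using False by (subst (1 2) delta.simps) simp
  qed
qed

lemma delta_01: "(\<And>j. \<zeta> j \<omega> \<in> {0, 1} \<times> {0, 1}) \<Longrightarrow> delta \<zeta> k \<omega> \<in> {0, 1}"
proof (induction k rule: less_induct)
  case (less k)
  show ?case
  proof (cases "k \<le> 1")
    case True
    then show ?thesis by (subst delta.simps) simp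
  next
    case False
    then have "delta \<zeta> (k div 2) \<omega> \<in> {0, 1}" "\<zeta> (k div 2) \<omega> \<in> {0, 1} \<times> {0, 1}"
      using less by auto
    then show ?thesis using False by (subst delta.simps) (auto split: if_splits)
  qed
qed

definition delta_path :: "nat \<Rightarrow> (nat \<Rightarrow> nat \<times> nat) \<Rightarrow> real" where
  "delta_path k x = real (delta (\<lambda>j _. x j) k ())"

lemma delta_path_measurable:
  "{1..<k} \<subseteq> S \<Longrightarrow> delta_path k \<in> borel_measurable (PiM S (\<lambda>_. count_space UNIV))"
proof (induction k rule: less_induct)
  case (less k)
  show ?case
  proof (cases "k \<le> 1")
    case True
    then have "delta_path k = (\<lambda>_. 1)"
      unfolding delta_path_def by (intro ext) (subst delta.simps, simp)
    then show ?thesis by simp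
  next
    case False
    have "x < k" if "x < k div 2" for x
      using that div_le_dividend[of k 2] by linarith
    then have half: "k div 2 < k" "k div 2 \<in> S" "{1..<k div 2} \<subseteq> S"
      using False less.prems by auto
    have "delta_path k = (\<lambda>x. delta_path (k div 2) x *
        real (if even k then fst (x (k div 2)) else snd (x (k div 2))))"
      unfolding delta_path_def using False by (intro ext) (subst delta.simps, simp)
    moreover have "(\<lambda>x. real (if even k then fst (x (k div 2)) else snd (x (k div 2))))
        \<in> borel_measurable (PiM S (\<lambda>_. count_space (UNIV :: (nat \<times> nat) set)))"
      by (rule measurable_compose[OF measurable_component_singleton[OF half(2)]]) simp
    ultimately show ?thesis using less.IH[OF half(1,3)] by simp
  qed
qed

lemma delta_eq_delta_path:
  "{1..<k} \<subseteq> S \<Longrightarrow> real (delta \<zeta> k \<omega>) = delta_path k (restrict (\<lambda>j. \<zeta> j \<omega>) S)"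
  unfolding delta_path_def by (subst delta_local[where ?\<zeta>2.0 = "\<lambda>j _. restrict (\<lambda>j. \<zeta> j \<omega>) S j"]) auto

text \<open>The matrix P: \<open>pmat p i j\<close> is the mean number of observed type-j children of an observed
  type-i individual.\<close>

definition pmat :: "(nat \<Rightarrow> nat \<Rightarrow> nat \<Rightarrow> real) \<Rightarrow> nat \<Rightarrow> nat \<Rightarrow> real" where
  "pmat p i j = (if j = 0 then p i 1 0 + p i 1 1 else p i 0 1 + p i 1 1)"

lemma sum_bit_pairs:
  "(\<Sum>v\<in>{0, 1 :: nat} \<times> {0, 1 :: nat}. g v) = g (0, 0) + g (0, 1) + g (1, 0) + (g (1, 1) :: real)"
proof -
  have "{0, 1 :: nat} \<times> {0, 1 :: nat} = insert (0, 0) (insert (0, 1) (insert (1, 0) {(1, 1)}))" by auto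
  then show ?thesis by (simp add: sum.insert_if)
qed

locale obs_tree = prob_space M for M :: "'a measure" +
  fixes \<zeta> :: "nat \<Rightarrow> 'a \<Rightarrow> nat \<times> nat" and p :: "nat \<Rightarrow> nat \<Rightarrow> nat \<Rightarrow> real"
    and \<pi> :: real and z :: "nat \<Rightarrow> real"
  assumes zeta_val: "\<And>k \<omega>. \<omega> \<in> space M \<Longrightarrow> \<zeta> k \<omega> \<in> {0, 1} \<times> {0, 1}"
    and zeta_indep: "indep_vars (\<lambda>_. count_space UNIV) \<zeta> {1..}"
    and zeta_law: "\<And>k j0 j1. k \<ge> 1 \<Longrightarrow>
      measure M {\<omega> \<in> space M. \<zeta> k \<omega> = (j0, j1)} = p (k mod 2) j0 j1"
    and pi_gt1: "\<pi> > 1"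
    and z_pos: "z 0 > 0" "z 1 > 0" "z 0 + z 1 = 1"
    and z_eig0: "z 0 * (p 0 1 0 + p 0 1 1) + z 1 * (p 1 1 0 + p 1 1 1) = \<pi> * z 0"
    and z_eig1: "z 0 * (p 0 0 1 + p 0 1 1) + z 1 * (p 1 0 1 + p 1 1 1) = \<pi> * z 1"
begin

lemma zeta_measurable: "1 \<le> k \<Longrightarrow> \<zeta> k \<in> measurable M (count_space UNIV)"
  using zeta_indep unfolding indep_vars_def by auto

lemma zeta_fun_measurable [measurable]:
  "1 \<le> k \<Longrightarrow> (\<lambda>\<omega>. (f (\<zeta> k \<omega>) :: real)) \<in> borel_measurable M"
  by (rule measurable_compose[OF zeta_measurable]) auto

lemma zeta_restrict_measurable:
  "S \<subseteq> {1..} \<Longrightarrow> (\<lambda>\<omega>. restrict (\<lambda>j. \<zeta> j \<omega>) S) \<in> measurable M (PiM S (\<lambda>_. count_space UNIV))"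
  by (rule measurable_restrict) (auto intro!: zeta_measurable)

lemma delta_measurable [measurable]: "(\<lambda>\<omega>. real (delta \<zeta> k \<omega>)) \<in> borel_measurable M"
proof -
  have "(\<lambda>\<omega>. delta_path k (restrict (\<lambda>j. \<zeta> j \<omega>) {1..<k})) \<in> borel_measurable M"
    by (rule measurable_compose[OF zeta_restrict_measurable delta_path_measurable]) auto
  then show ?thesis by (simp add: delta_eq_delta_path[of k "{1..<k}"])
qed

lemma delta_01_space: "\<omega> \<in> space M \<Longrightarrow> delta \<zeta> k \<omega> \<in> {0, 1}"
  by (rule delta_01) (rule zeta_val)

lemma delta_abs_le: "\<omega> \<in> space M \<Longrightarrow> \<bar>real (delta \<zeta> k \<omega>)\<bar> \<le> 1"
  using delta_01_space[of \<omega> k] by auto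

lemma p_bounds: "i \<le> 1 \<Longrightarrow> 0 \<le> p i j0 j1 \<and> p i j0 j1 \<le> 1"
proof -
  assume "i \<le> 1"
  then have "1 \<le> i + 2" "(i + 2) mod 2 = i" by auto
  then show ?thesis using zeta_law[of "i + 2" j0 j1] prob_le_1 by (metis measure_nonneg)
qed

lemma expectation_zeta_fun:
  fixes f :: "nat \<times> nat \<Rightarrow> real"
  assumes k: "1 \<le> k"
  shows "(\<integral>\<omega>. f (\<zeta> k \<omega>) \<partial>M) = (\<Sum>v\<in>{0, 1} \<times> {0, 1}. f v * p (k mod 2) (fst v) (snd v))"
proof -
  have sets: "{\<omega> \<in> space M. \<zeta> k \<omega> = v} \<in> sets M" for v
    using measurable_sets[OF zeta_measurable[OF k], of "{v}"] by (simp add: vimage_def Int_def conj_commute)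
  have "(\<integral>\<omega>. f (\<zeta> k \<omega>) \<partial>M)
      = (\<integral>\<omega>. (\<Sum>v\<in>{0, 1} \<times> {0, 1}. f v * indicator {\<omega> \<in> space M. \<zeta> k \<omega> = v} \<omega>) \<partial>M)"
  proof (rule Bochner_Integration.integral_cong)
    fix \<omega> assume "\<omega> \<in> space M"
    then show "f (\<zeta> k \<omega>) = (\<Sum>v\<in>{0, 1} \<times> {0, 1}. f v * indicator {\<omega> \<in> space M. \<zeta> k \<omega> = v} \<omega>)"
      using zeta_val[of \<omega> k] by (simp add: indicator_def if_distrib sum.delta' cong: if_cong)
  qed simp
  also have "\<dots> = (\<Sum>v\<in>{0, 1} \<times> {0, 1}. f v * measure M {\<omega> \<in> space M. \<zeta> k \<omega> = v})"
    using sets by (subst Bochner_Integration.integral_sum)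
      (auto intro!: integrable_real_indicator simp: Int_absorb1 sets.sets_into_space less_top[symmetric])
  also have "\<dots> = (\<Sum>v\<in>{0, 1} \<times> {0, 1}. f v * p (k mod 2) (fst v) (snd v))"
    using zeta_law[OF k] by (intro sum.cong refl) (metis prod.collapse)
  finally show ?thesis .
qed

lemma zeta_past_indep:
  fixes G :: "(nat \<Rightarrow> nat \<times> nat) \<Rightarrow> real" and H :: "nat \<times> nat \<Rightarrow> real"
  assumes l: "1 \<le> l" and G: "G \<in> borel_measurable (PiM {1..<l} (\<lambda>_. count_space UNIV))"
    and iG: "integrable M (\<lambda>\<omega>. G (restrict (\<lambda>j. \<zeta> j \<omega>) {1..<l}))"
    and iH: "integrable M (\<lambda>\<omega>. H (\<zeta> l \<omega>))"
  shows "(\<integral>\<omega>. G (restrict (\<lambda>j. \<zeta> j \<omega>) {1..<l}) * H (\<zeta> l \<omega>) \<partial>M)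
       = (\<integral>\<omega>. G (restrict (\<lambda>j. \<zeta> j \<omega>) {1..<l}) \<partial>M) * (\<integral>\<omega>. H (\<zeta> l \<omega>) \<partial>M)"
proof -
  have "indep_var (PiM {1..<l} (\<lambda>_. count_space UNIV)) (\<lambda>\<omega>. restrict (\<lambda>j. \<zeta> j \<omega>) {1..<l})
      (PiM {l} (\<lambda>_. count_space UNIV)) (\<lambda>\<omega>. restrict (\<lambda>j. \<zeta> j \<omega>) {l})"
    by (rule indep_var_restrict[OF zeta_indep]) (use l in auto)
  moreover have "(\<lambda>x. H (x l)) \<in> borel_measurable (PiM {l} (\<lambda>_. count_space (UNIV :: (nat \<times> nat) set)))"
    by (rule measurable_compose[OF measurable_component_singleton]) auto
  ultimately have "indep_var borel (G \<circ> (\<lambda>\<omega>. restrict (\<lambda>j. \<zeta> j \<omega>) {1..<l}))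
      borel ((\<lambda>x. H (x l)) \<circ> (\<lambda>\<omega>. restrict (\<lambda>j. \<zeta> j \<omega>) {l}))"
    by (rule indep_var_compose[OF _ G])
  then have "indep_var borel (\<lambda>\<omega>. G (restrict (\<lambda>j. \<zeta> j \<omega>) {1..<l})) borel (\<lambda>\<omega>. H (\<zeta> l \<omega>))"
    by (simp add: o_def)
  then show ?thesis by (rule indep_var_lebesgue_integral[OF _ iG iH])
qed

definition obs_mean :: "nat \<Rightarrow> real" where
  "obs_mean k = (\<integral>\<omega>. real (delta \<zeta> k \<omega>) \<partial>M)"

lemma integrable_delta: "integrable M (\<lambda>\<omega>. real (delta \<zeta> k \<omega>))"
proof (rule integrable_const_bound[where B = 1])
  show "AE \<omega> in M. norm (real (delta \<zeta> k \<omega>)) \<le> 1"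
    using delta_01_space[of _ k] by (intro AE_I2) fastforce
qed simp

lemma obs_mean_nonneg: "0 \<le> obs_mean k"
  unfolding obs_mean_def by simp

lemma obs_mean_child:
  assumes k: "1 \<le> k" and j: "j \<le> 1"
  shows "obs_mean (2 * k + j) = obs_mean k * pmat p (k mod 2) j"
proof -
  define f :: "nat \<times> nat \<Rightarrow> real" where "f v = real (if j = 0 then fst v else snd v)" for v
  define past where "past \<omega> = restrict (\<lambda>j. \<zeta> j \<omega>) {1..<k}" for \<omega>
  have child: "real (delta \<zeta> (2 * k + j) \<omega>) = delta_path k (past \<omega>) * f (\<zeta> k \<omega>)" for \<omega>
  proof -
    have "j = 0 \<or> j = 1" using j by auto
    then have "delta \<zeta> (2 * k + j) \<omega> = delta \<zeta> k \<omega> * (if j = 0 then fst (\<zeta> k \<omega>) else snd (\<zeta> k \<omega>))"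
      using delta_even[OF k] delta_odd[OF k] by auto
    then show ?thesis unfolding f_def past_def by (simp add: delta_eq_delta_path[of k "{1..<k}"])
  qed
  have past_delta: "delta_path k (past \<omega>) = real (delta \<zeta> k \<omega>)" for \<omega>
    unfolding past_def by (simp add: delta_eq_delta_path[of k "{1..<k}"])
  have "obs_mean (2 * k + j) = (\<integral>\<omega>. delta_path k (past \<omega>) \<partial>M) * (\<integral>\<omega>. f (\<zeta> k \<omega>) \<partial>M)"
    unfolding obs_mean_def child past_def
  proof (rule zeta_past_indep[OF k])
    show "integrable M (\<lambda>\<omega>. f (\<zeta> k \<omega>))"
    proof (rule integrable_const_bound[where B = 1])
      show "AE \<omega> in M. norm (f (\<zeta> k \<omega>)) \<le> 1"
      proof (rule AE_I2)
        fix \<omega> assume "\<omega> \<in> space M"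
        then have "fst (\<zeta> k \<omega>) \<le> 1" "snd (\<zeta> k \<omega>) \<le> 1" using zeta_val[of \<omega> k] by auto
        then show "norm (f (\<zeta> k \<omega>)) \<le> 1" by (simp add: f_def)
      qed
    qed (use k in simp)
    show "integrable M (\<lambda>\<omega>. delta_path k (restrict (\<lambda>j. \<zeta> j \<omega>) {1..<k}))"
      unfolding past_delta[unfolded past_def] by (rule integrable_delta)
  qed (rule delta_path_measurable, simp)
  also have "(\<integral>\<omega>. f (\<zeta> k \<omega>) \<partial>M) = pmat p (k mod 2) j"
    unfolding expectation_zeta_fun[OF k] sum_bit_pairs using j by (auto simp: f_def pmat_def)
  finally show ?thesis by (simp add: past_delta obs_mean_def)
qed

definition gen_mean :: "nat \<Rightarrow> nat \<Rightarrow> real" where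
  "gen_mean m j = (\<Sum>k\<in>Gen m \<inter> Ty j. obs_mean k)"

lemma gen_mean_Suc: "j \<le> 1 \<Longrightarrow> gen_mean (Suc m) j = gen_mean m 0 * pmat p 0 j + gen_mean m 1 * pmat p 1 j"
proof -
  assume j: "j \<le> 1"
  have Gen_split: "Gen m = (Gen m \<inter> Ty 0) \<union> (Gen m \<inter> Ty 1)"
    by (auto simp: Ty_def dest: Gen_ge1)
  have "gen_mean (Suc m) j = (\<Sum>k\<in>Gen m. obs_mean (2 * k + j))"
    unfolding gen_mean_def Gen_Suc_Ty[OF j] by (simp add: sum.reindex inj_on_def)
  also have "\<dots> = (\<Sum>k\<in>Gen m. obs_mean k * pmat p (k mod 2) j)"
    by (intro sum.cong refl obs_mean_child j) (auto dest: Gen_ge1)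
  also have "\<dots> = (\<Sum>k\<in>Gen m \<inter> Ty 0. obs_mean k * pmat p (k mod 2) j)
      + (\<Sum>k\<in>Gen m \<inter> Ty 1. obs_mean k * pmat p (k mod 2) j)"
    by (subst Gen_split, rule sum.union_disjoint) (auto simp: Ty_def)
  also have "\<dots> = gen_mean m 0 * pmat p 0 j + gen_mean m 1 * pmat p 1 j"
    unfolding gen_mean_def sum_distrib_right by (intro arg_cong2[where f = "(+)"] sum.cong refl) (auto simp: Ty_def)
  finally show ?thesis .
qed

text \<open>Since \<open>z\<close> is a positive left eigenvector of P and generation 0 consists of the single
  type-1 root, the expected generation sizes are dominated by \<open>\<pi>^m z / z_1\<close>.\<close>

lemma gen_mean_bound: "j \<le> 1 \<Longrightarrow> gen_mean m j \<le> \<pi> ^ m * z j / z 1"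
proof (induction m arbitrary: j)
  case 0
  have "Gen 0 = {1}" unfolding Gen_def by auto
  then have "Gen 0 \<inter> Ty 0 = {}" "Gen 0 \<inter> Ty 1 = {1}" by (auto simp: Ty_def)
  moreover have "obs_mean 1 = 1" unfolding obs_mean_def delta_1 by (simp add: prob_space)
  ultimately have "gen_mean 0 0 = 0" "gen_mean 0 1 = 1" by (simp_all add: gen_mean_def)
  moreover have "j = 0 \<or> j = 1" using 0 by auto
  ultimately show ?case using z_pos by auto
next
  case (Suc m)
  have pmat_nonneg: "0 \<le> pmat p i j" if "i \<le> 1" for i
    using p_bounds[OF that] by (simp add: pmat_def)
  have eigen: "z 0 * pmat p 0 j + z 1 * pmat p 1 j = \<pi> * z j"
  proof -
    have "j = 0 \<or> j = 1" using Suc.prems by auto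
    then show ?thesis using z_eig0 z_eig1 by (elim disjE) (simp_all add: pmat_def)
  qed
  have "gen_mean (Suc m) j = gen_mean m 0 * pmat p 0 j + gen_mean m 1 * pmat p 1 j"
    by (rule gen_mean_Suc[OF Suc.prems])
  also have "\<dots> \<le> (\<pi> ^ m * z 0 / z 1) * pmat p 0 j + (\<pi> ^ m * z 1 / z 1) * pmat p 1 j"
    by (intro add_mono mult_right_mono Suc.IH pmat_nonneg) auto
  also have "\<dots> = \<pi> ^ m / z 1 * (z 0 * pmat p 0 j + z 1 * pmat p 1 j)"
    by (simp add: algebra_simps)
  also have "\<dots> = \<pi> ^ Suc m * z j / z 1"
    unfolding eigen by simp
  finally show ?case .
qed

definition obs_const :: real where
  "obs_const = \<pi> / ((\<pi> - 1) * z 1)"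

lemma obs_mean_sum_bound: "j \<le> 1 \<Longrightarrow> (\<Sum>k\<in>Tr_nonroot j n. obs_mean k) \<le> obs_const * \<pi> ^ n"
proof -
  assume j: "j \<le> 1"
  have "z j \<le> 1" using j z_pos by (cases j) auto
  then have "\<pi> ^ Suc m * z j / z 1 \<le> \<pi> ^ Suc m * 1 / z 1" for m
    using z_pos pi_gt1 by (intro divide_right_mono mult_left_mono) auto
  then have gen: "gen_mean (Suc m) j \<le> \<pi> ^ Suc m / z 1" for m
    using gen_mean_bound[OF j, of "Suc m"] by (metis mult.right_neutral order.trans)
  have geometric: "(\<Sum>m<n. \<pi> ^ Suc m) \<le> \<pi> ^ Suc n / (\<pi> - 1)"
  proof (induction n)
    case (Suc n)
    then have "(\<Sum>m<Suc n. \<pi> ^ Suc m) \<le> \<pi> ^ Suc n / (\<pi> - 1) + \<pi> ^ Suc n" by simp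
    also have "\<dots> = \<pi> ^ Suc (Suc n) / (\<pi> - 1)" using pi_gt1 by (simp add: field_simps)
    finally show ?case .
  qed (use pi_gt1 in simp)
  have "(\<Sum>k\<in>Tr_nonroot j n. obs_mean k) = (\<Sum>m<n. gen_mean (Suc m) j)"
    unfolding sum_Tr_nonroot gen_mean_def ..
  also have "\<dots> \<le> (\<Sum>m<n. \<pi> ^ Suc m) / z 1"
    unfolding sum_divide_distrib by (intro sum_mono gen)
  also have "\<dots> \<le> \<pi> ^ Suc n / (\<pi> - 1) / z 1"
    using geometric z_pos by (intro divide_right_mono) auto
  also have "\<dots> = obs_const * \<pi> ^ n"
    unfolding obs_const_def by (simp add: field_simps)
  finally show ?thesis .
qed

text \<open>A family of centred variables that are pairwise orthogonal and whose second moments are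
  dominated by the observation probabilities: by Pythagoras and the previous bound, the second
  moment of the n-th partial sum is \<open>O(\<pi>^n)\<close>, so the partial sums are \<open>o(\<pi>^n)\<close> almost surely.\<close>

lemma orthogonal_sum_negligible:
  fixes U :: "nat \<Rightarrow> 'a \<Rightarrow> real" and C :: real
  assumes j: "j \<le> 1"
    and meas: "\<And>k. k \<in> Ty j \<Longrightarrow> 2 \<le> k \<Longrightarrow> U k \<in> borel_measurable M"
    and prod_int: "\<And>k l. k \<in> Ty j \<Longrightarrow> l \<in> Ty j \<Longrightarrow> 2 \<le> k \<Longrightarrow> 2 \<le> l \<Longrightarrow>
      integrable M (\<lambda>\<omega>. U k \<omega> * U l \<omega>)"
    and orth: "\<And>k l. k \<in> Ty j \<Longrightarrow> l \<in> Ty j \<Longrightarrow> 2 \<le> k \<Longrightarrow> 2 \<le> l \<Longrightarrow> k \<noteq> l \<Longrightarrow>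
      (\<integral>\<omega>. U k \<omega> * U l \<omega> \<partial>M) = 0"
    and second_moment: "\<And>k. k \<in> Ty j \<Longrightarrow> 2 \<le> k \<Longrightarrow> (\<integral>\<omega>. (U k \<omega>)\<^sup>2 \<partial>M) \<le> C * obs_mean k"
  shows "AE \<omega> in M. (\<lambda>n. (\<Sum>k\<in>Tr_nonroot j n. U k \<omega>) / \<pi> ^ n) \<longlonglongrightarrow> 0"
proof (rule AE_tendsto_zero_of_L2_bound[OF _ _ _ pi_gt1])
  fix n
  note members = Tr_nonroot_Ty[of _ j n] Tr_nonroot_ge2[of _ j n]
  show "(\<lambda>\<omega>. \<Sum>k\<in>Tr_nonroot j n. U k \<omega>) \<in> borel_measurable M"
    using members meas by (intro borel_measurable_sum) auto
  note pythagoras = integral_square_orthogonal_sum[where K = "Tr_nonroot j n" and U = U and M = M]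
  show "integrable M (\<lambda>\<omega>. (\<Sum>k\<in>Tr_nonroot j n. U k \<omega>)\<^sup>2)"
    using members by (intro pythagoras(1) prod_int orth) auto
  have "(\<integral>\<omega>. (\<Sum>k\<in>Tr_nonroot j n. U k \<omega>)\<^sup>2 \<partial>M) = (\<Sum>k\<in>Tr_nonroot j n. \<integral>\<omega>. (U k \<omega>)\<^sup>2 \<partial>M)"
    using members by (intro pythagoras(2) prod_int orth) auto
  also have "\<dots> \<le> (\<Sum>k\<in>Tr_nonroot j n. \<bar>C\<bar> * obs_mean k)"
    using members obs_mean_nonneg
    by (intro sum_mono order.trans[OF second_moment] mult_right_mono) auto
  also have "\<dots> \<le> \<bar>C\<bar> * (obs_const * \<pi> ^ n)"
    unfolding sum_distrib_left[symmetric] by (intro mult_left_mono obs_mean_sum_bound j) auto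
  finally show "(\<integral>\<omega>. (\<Sum>k\<in>Tr_nonroot j n. U k \<omega>)\<^sup>2 \<partial>M) \<le> (\<bar>C\<bar> * obs_const) * \<pi> ^ n"
    by (simp add: mult.assoc)
qed

lemma Zcount_sum:
  assumes "\<omega> \<in> space M"
  shows "real (Zcount \<zeta> m j \<omega>) = (\<Sum>k\<in>Gen m \<inter> Ty j. real (delta \<zeta> k \<omega>))"
proof -
  have "real (Zcount \<zeta> m j \<omega>) = (\<Sum>k\<in>Gen m \<inter> Ty j. if delta \<zeta> k \<omega> = 1 then 1 else 0)"
    unfolding Zcount_def by (simp add: sum.inter_filter[symmetric])
  also have "\<dots> = (\<Sum>k\<in>Gen m \<inter> Ty j. real (delta \<zeta> k \<omega>))"
    by (intro sum.cong refl) (use delta_01_space[OF assms] in fastforce)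
  finally show ?thesis .
qed

lemma obs_count_limit:
  assumes "\<omega> \<in> space M" and lim: "(\<lambda>n. real (Zcount \<zeta> n j \<omega>) / \<pi> ^ n) \<longlonglongrightarrow> L"
  shows "(\<lambda>n. (\<Sum>k\<in>Tr_nonroot j n. real (delta \<zeta> k \<omega>)) / \<pi> ^ n) \<longlonglongrightarrow> L * (\<pi> / (\<pi> - 1))"
  using geometric_partial_sums_limit[OF pi_gt1 lim]
  by (simp add: sum_Tr_nonroot Zcount_sum[OF assms(1)])

definition both_obs :: "nat \<Rightarrow> 'a \<Rightarrow> real" where
  "both_obs k \<omega> = real (fst (\<zeta> k \<omega>) * snd (\<zeta> k \<omega>))"

definition obs_dev :: "nat \<Rightarrow> 'a \<Rightarrow> real" where
  "obs_dev k \<omega> = real (delta \<zeta> k \<omega>) * (both_obs k \<omega> - p (k mod 2) 1 1)"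

lemma both_obs_measurable [measurable]: "1 \<le> k \<Longrightarrow> both_obs k \<in> borel_measurable M"
  unfolding both_obs_def by (rule zeta_fun_measurable)

lemma both_obs_01: "\<omega> \<in> space M \<Longrightarrow> both_obs k \<omega> \<in> {0, 1}"
  using zeta_val[of \<omega> k] unfolding both_obs_def by (auto simp: mem_Times_iff)

lemma integrable_both_obs: "1 \<le> k \<Longrightarrow> integrable M (both_obs k)"
  by (rule integrable_bounded[where B = 1]) (auto dest: both_obs_01[of _ k])

lemma both_obs_mean: "1 \<le> l \<Longrightarrow> (\<integral>\<omega>. both_obs l \<omega> \<partial>M) = p (l mod 2) 1 1"
  unfolding both_obs_def by (subst expectation_zeta_fun) (simp_all add: sum_bit_pairs)

lemma obs_dev_bound: "\<omega> \<in> space M \<Longrightarrow> \<bar>obs_dev k \<omega>\<bar> \<le> 1"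
proof -
  assume \<omega>: "\<omega> \<in> space M"
  have "\<bar>both_obs k \<omega> - p (k mod 2) 1 1\<bar> \<le> 1"
    using both_obs_01[OF \<omega>, of k] p_bounds[of "k mod 2" 1 1] by auto
  then show ?thesis
    using delta_01_space[OF \<omega>, of k] by (auto simp: obs_dev_def)
qed

lemma obs_dev_measurable [measurable]: "1 \<le> k \<Longrightarrow> obs_dev k \<in> borel_measurable M"
  unfolding obs_dev_def by measurable

lemma integrable_obs_dev_prod:
  "1 \<le> k \<Longrightarrow> 1 \<le> l \<Longrightarrow> integrable M (\<lambda>\<omega>. obs_dev k \<omega> * obs_dev l \<omega>)"
  using obs_dev_bound by (intro integrable_bounded[where B = 1]) (auto simp: abs_mult intro!: mult_le_one)

lemma obs_dev_orthogonal:
  assumes k: "1 \<le> k" and kl: "k < l"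
  shows "(\<integral>\<omega>. obs_dev k \<omega> * obs_dev l \<omega> \<partial>M) = 0"
proof -
  have l: "1 \<le> l" using k kl by simp
  define G where "G x = delta_path k x * (real (fst (x k) * snd (x k)) - p (k mod 2) 1 1) * delta_path l x"
    for x :: "nat \<Rightarrow> nat \<times> nat"
  define H where "H v = real (fst v * snd v) - p (l mod 2) 1 1" for v :: "nat \<times> nat"
  have past: "G (restrict (\<lambda>j. \<zeta> j \<omega>) {1..<l}) = obs_dev k \<omega> * real (delta \<zeta> l \<omega>)" for \<omega>
    using k kl by (simp add: G_def obs_dev_def both_obs_def delta_eq_delta_path[of _ "{1..<l}"])
  have split: "obs_dev k \<omega> * obs_dev l \<omega> = G (restrict (\<lambda>j. \<zeta> j \<omega>) {1..<l}) * H (\<zeta> l \<omega>)" for \<omega>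
    unfolding past by (simp add: obs_dev_def both_obs_def H_def)
  have "(\<integral>\<omega>. obs_dev k \<omega> * obs_dev l \<omega> \<partial>M)
      = (\<integral>\<omega>. G (restrict (\<lambda>j. \<zeta> j \<omega>) {1..<l}) \<partial>M) * (\<integral>\<omega>. H (\<zeta> l \<omega>) \<partial>M)"
    unfolding split
  proof (rule zeta_past_indep[OF l])
    have "(\<lambda>x. real (fst (x k) * snd (x k))) \<in> borel_measurable (PiM {1..<l} (\<lambda>_. count_space UNIV))"
      by (rule measurable_compose[OF measurable_component_singleton]) (use k kl in auto)
    then show "G \<in> borel_measurable (PiM {1..<l} (\<lambda>_. count_space UNIV))"
      unfolding G_def using kl by (intro borel_measurable_times delta_path_measurable) auto
    show "integrable M (\<lambda>\<omega>. G (restrict (\<lambda>j. \<zeta> j \<omega>) {1..<l}))"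
      unfolding past using k obs_dev_bound delta_abs_le
      by (intro integrable_const_bound[where B = 1] AE_I2) (auto simp: abs_mult intro!: mult_le_one)
    have "H (\<zeta> l \<omega>) = both_obs l \<omega> - p (l mod 2) 1 1" for \<omega>
      by (simp add: H_def both_obs_def)
    then show "integrable M (\<lambda>\<omega>. H (\<zeta> l \<omega>))"
      by (simp add: integrable_both_obs[OF l])
  qed
  also have "(\<integral>\<omega>. H (\<zeta> l \<omega>) \<partial>M) = 0"
    using both_obs_mean[OF l] integrable_both_obs[OF l] unfolding H_def both_obs_def[symmetric]
    by (subst Bochner_Integration.integral_diff) (auto simp: prob_space)
  finally show ?thesis by simp
qed

lemma obs_dev_negligible:
  "j \<le> 1 \<Longrightarrow> AE \<omega> in M. (\<lambda>n. (\<Sum>k\<in>Tr_nonroot j n. obs_dev k \<omega>) / \<pi> ^ n) \<longlonglongrightarrow> 0"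
proof (rule orthogonal_sum_negligible[where C = 1])
  fix k l assume "k \<in> Ty j" "l \<in> Ty j" "2 \<le> k" "2 \<le> l"
  then show "integrable M (\<lambda>\<omega>. obs_dev k \<omega> * obs_dev l \<omega>)"
    by (intro integrable_obs_dev_prod) auto
  assume "k \<noteq> l"
  then show "(\<integral>\<omega>. obs_dev k \<omega> * obs_dev l \<omega> \<partial>M) = 0"
    using obs_dev_orthogonal[of k l] obs_dev_orthogonal[of l k] \<open>2 \<le> k\<close> \<open>2 \<le> l\<close>
    by (cases "k < l") (auto simp: mult.commute)
next
  fix k :: nat assume "k \<in> Ty j" "2 \<le> k"
  have "(\<integral>\<omega>. (obs_dev k \<omega>)\<^sup>2 \<partial>M) \<le> obs_mean k"
    unfolding obs_mean_def
  proof (rule integral_mono)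
    fix \<omega> assume \<omega>: "\<omega> \<in> space M"
    have "(obs_dev k \<omega>)\<^sup>2 = \<bar>obs_dev k \<omega>\<bar> * \<bar>obs_dev k \<omega>\<bar>"
      by (simp add: power2_eq_square abs_mult_self_eq)
    also have "\<dots> \<le> \<bar>obs_dev k \<omega>\<bar> * 1"
      using obs_dev_bound[OF \<omega>, of k] by (intro mult_left_mono) auto
    also have "\<dots> \<le> real (delta \<zeta> k \<omega>)"
      using obs_dev_bound[OF \<omega>, of k] delta_01_space[OF \<omega>, of k] by (auto simp: obs_dev_def)
    finally show "(obs_dev k \<omega>)\<^sup>2 \<le> real (delta \<zeta> k \<omega>)" .
  qed (use \<open>2 \<le> k\<close> integrable_obs_dev_prod[of k k] integrable_delta in \<open>auto simp: power2_eq_square\<close>)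
  then show "(\<integral>\<omega>. (obs_dev k \<omega>)\<^sup>2 \<partial>M) \<le> 1 * obs_mean k" by simp
qed (auto simp: Ty_def)

end

text \<open>The BAR noise under (HN.1) and (HN.2); only the hypotheses the argument needs are assumed.
  \<open>F_n = natF M X n\<close> is the \<sigma>-algebra generated by the process up to generation n.\<close>

locale bar_noise = prob_space M for M :: "'a measure" +
  fixes X \<epsilon> :: "nat \<Rightarrow> 'a \<Rightarrow> real" and a b c d \<sigma>2 \<tau>4 \<rho> \<nu>2 :: real
  assumes X_meas: "\<And>k. X k \<in> borel_measurable M"
    and eps_meas: "\<And>k. \<epsilon> k \<in> borel_measurable M"
    and bar0: "\<And>k \<omega>. k \<ge> 1 \<Longrightarrow> \<omega> \<in> space M \<Longrightarrow> X (2*k) \<omega> = a + b * X k \<omega> + \<epsilon> (2*k) \<omega>"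
    and bar1: "\<And>k \<omega>. k \<ge> 1 \<Longrightarrow> \<omega> \<in> space M \<Longrightarrow> X (2*k+1) \<omega> = c + d * X k \<omega> + \<epsilon> (2*k+1) \<omega>"
    and eps_L8: "\<And>n k. k \<in> Gen (Suc n) \<Longrightarrow> integrable M (\<lambda>\<omega>. \<epsilon> k \<omega> ^ 8)"
    and ce2: "\<And>n k. k \<in> Gen (Suc n) \<Longrightarrow>
      AE \<omega> in M. real_cond_exp M (natF M X n) (\<lambda>\<omega>. \<epsilon> k \<omega> ^ 2) \<omega> = \<sigma>2"
    and ce4: "\<And>n k. k \<in> Gen (Suc n) \<Longrightarrow>
      AE \<omega> in M. real_cond_exp M (natF M X n) (\<lambda>\<omega>. \<epsilon> k \<omega> ^ 4) \<omega> = \<tau>4"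
    and cc1: "\<And>n k. k \<in> Gen n \<Longrightarrow>
      AE \<omega> in M. real_cond_exp M (natF M X n) (\<lambda>\<omega>. \<epsilon> (2*k) \<omega> * \<epsilon> (2*k+1) \<omega>) \<omega> = \<rho>"
    and cc2: "\<And>n k. k \<in> Gen n \<Longrightarrow>
      AE \<omega> in M. real_cond_exp M (natF M X n)
        (\<lambda>\<omega>. \<epsilon> (2*k) \<omega> ^ 2 * \<epsilon> (2*k+1) \<omega> ^ 2) \<omega> = \<nu>2 * \<tau>4"
    and cind: "\<And>n J B. J \<subseteq> Gen n \<Longrightarrow> (\<And>k. k \<in> J \<Longrightarrow> B k \<in> sets (borel :: (real \<times> real) measure)) \<Longrightarrow>
      AE \<omega> in M. real_cond_exp M (natF M X n)
          (\<lambda>\<omega>. \<Prod>k\<in>J. indicator (B k) (\<epsilon> (2*k) \<omega>, \<epsilon> (2*k+1) \<omega>)) \<omega>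
        = (\<Prod>k\<in>J. real_cond_exp M (natF M X n)
             (\<lambda>\<omega>. indicator (B k) (\<epsilon> (2*k) \<omega>, \<epsilon> (2*k+1) \<omega>)) \<omega>)"
begin

declare X_meas [measurable] eps_meas [measurable]

lemma natF_space: "space (natF M X n) = space M"
  unfolding natF_def by (rule space_measure_of_conv)

lemma natF_sets:
  "sets (natF M X n) = sigma_sets (space M) {X k -` B \<inter> space M | k B. k \<in> Tr n \<and> B \<in> sets borel}"
  unfolding natF_def by (rule sets_measure_of) auto

lemma natF_subalgebra: "subalgebra M (natF M X n)"
  unfolding subalgebra_def natF_space natF_sets
  by (auto intro!: sets.sigma_sets_subset measurable_sets[OF X_meas])

lemma natF_sigma_finite: "sigma_finite_subalgebra M (natF M X n)"
  by (rule finite_measure_subalgebra_is_sigma_finite)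
    (simp add: finite_measure_subalgebra_def finite_measure_subalgebra_axioms_def natF_subalgebra
      finite_measure_axioms)

lemma X_natF_measurable: "k \<in> Tr n \<Longrightarrow> X k \<in> borel_measurable (natF M X n)"
proof (rule measurableI)
  fix B :: "real set" assume "k \<in> Tr n" "B \<in> sets borel"
  then show "X k -` B \<inter> space (natF M X n) \<in> sets (natF M X n)"
    unfolding natF_sets natF_space by (intro sigma_sets.Basic) blast
qed simp

text \<open>The noise \<open>\<epsilon>_k = X_k - a - b X_{k/2}\<close> (or with c, d) is determined by the process up to
  the generation of k.\<close>

lemma eps_natF_measurable:
  assumes k: "k \<in> Tr n" "2 \<le> k" shows "\<epsilon> k \<in> borel_measurable (natF M X n)"
proof -
  have parent: "k div 2 \<in> Tr n" "1 \<le> k div 2" using k by (auto simp: Tr_eq)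
  note [measurable] = X_natF_measurable[OF k(1)] X_natF_measurable[OF parent(1)]
  have "\<epsilon> k \<omega> = X k \<omega> - (if even k then a + b * X (k div 2) \<omega> else c + d * X (k div 2) \<omega>)"
    if "\<omega> \<in> space (natF M X n)" for \<omega>
  proof (cases "even k")
    case True
    then show ?thesis using bar0[OF parent(2), of \<omega>] that by (simp add: natF_space)
  next
    case False
    then have "k = 2 * (k div 2) + 1" by simp
    then show ?thesis using bar1[OF parent(2), of \<omega>] that False by (simp add: natF_space)
  qed
  then show ?thesis by (subst measurable_cong) auto
qed

lemma integrable_eps_power:
  assumes k: "2 \<le> k" and j: "j \<le> 8" shows "integrable M (\<lambda>\<omega>. \<epsilon> k \<omega> ^ j)"
proof (rule Bochner_Integration.integrable_bound)
  obtain m where "k \<in> Gen (Suc m)" using in_Gen_Suc[OF k] by blast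
  then show "integrable M (\<lambda>\<omega>. 1 + \<epsilon> k \<omega> ^ 8)" using eps_L8 by simp
  have "\<bar>x ^ j\<bar> \<le> \<bar>1 + x ^ 8\<bar>" for x :: real
  proof (cases "\<bar>x\<bar> \<le> 1")
    case True
    then have "\<bar>x ^ j\<bar> \<le> 1" by (simp add: power_le_one power_abs)
    moreover have "0 \<le> x ^ 8" by (simp add: zero_le_even_power)
    ultimately show ?thesis by linarith
  next
    case False
    then have "\<bar>x\<bar> ^ j \<le> \<bar>x\<bar> ^ 8" using j by (intro power_increasing) auto
    then show ?thesis by (simp add: power_abs power_even_abs)
  qed
  then show "AE \<omega> in M. norm (\<epsilon> k \<omega> ^ j) \<le> norm (1 + \<epsilon> k \<omega> ^ 8)" by simp
qed simp

lemma integrable_eps_prod4: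
  assumes "2 \<le> a1" "2 \<le> a2" "2 \<le> a3" "2 \<le> a4"
  shows "integrable M (\<lambda>\<omega>. \<epsilon> a1 \<omega> * \<epsilon> a2 \<omega> * \<epsilon> a3 \<omega> * \<epsilon> a4 \<omega>)"
proof (rule Bochner_Integration.integrable_bound)
  show "integrable M (\<lambda>\<omega>. \<epsilon> a1 \<omega> ^ 4 + \<epsilon> a2 \<omega> ^ 4 + \<epsilon> a3 \<omega> ^ 4 + \<epsilon> a4 \<omega> ^ 4)"
    using assms by (intro Bochner_Integration.integrable_add integrable_eps_power) auto
  have "0 \<le> x ^ 4" for x :: real by (simp add: zero_le_even_power)
  then show "AE \<omega> in M. norm (\<epsilon> a1 \<omega> * \<epsilon> a2 \<omega> * \<epsilon> a3 \<omega> * \<epsilon> a4 \<omega>)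
      \<le> norm (\<epsilon> a1 \<omega> ^ 4 + \<epsilon> a2 \<omega> ^ 4 + \<epsilon> a3 \<omega> ^ 4 + \<epsilon> a4 \<omega> ^ 4)"
    by (auto intro: order.trans[OF abs_mult4_le] abs_ge_self)
qed simp

lemma integrable_eps_prod2:
  assumes "2 \<le> a1" "2 \<le> a2" shows "integrable M (\<lambda>\<omega>. \<epsilon> a1 \<omega> * \<epsilon> a2 \<omega>)"
proof (rule Bochner_Integration.integrable_bound)
  show "integrable M (\<lambda>\<omega>. \<epsilon> a1 \<omega> ^ 2 + \<epsilon> a2 \<omega> ^ 2)"
    using assms by (intro Bochner_Integration.integrable_add integrable_eps_power) auto
  have "\<bar>x * y\<bar> \<le> \<bar>x\<^sup>2 + y\<^sup>2\<bar>" for x y :: real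
    using abs_mult_le_sq[of x y] by simp
  then show "AE \<omega> in M. norm (\<epsilon> a1 \<omega> * \<epsilon> a2 \<omega>) \<le> norm (\<epsilon> a1 \<omega> ^ 2 + \<epsilon> a2 \<omega> ^ 2)" by simp
qed simp

lemma integrable_centered_sq_prod:
  assumes "2 \<le> k" "2 \<le> l"
  shows "integrable M (\<lambda>\<omega>. (\<epsilon> k \<omega> ^ 2 - \<sigma>2) * (\<epsilon> l \<omega> ^ 2 - \<sigma>2))"
proof -
  have "integrable M (\<lambda>\<omega>. \<epsilon> k \<omega> * \<epsilon> k \<omega> * \<epsilon> l \<omega> * \<epsilon> l \<omega> - \<sigma>2 * \<epsilon> k \<omega> ^ 2 - \<sigma>2 * \<epsilon> l \<omega> ^ 2 + \<sigma>2 * \<sigma>2)"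
    using assms by (intro Bochner_Integration.integrable_add Bochner_Integration.integrable_diff
        integrable_eps_prod4 Bochner_Integration.integrable_mult_right integrable_eps_power) auto
  then show ?thesis
    by (rule Bochner_Integration.integrable_cong[THEN iffD1, rotated 2]) (auto simp: algebra_simps power2_eq_square)
qed

lemma integrable_centered_pair_prod:
  assumes "1 \<le> u" "1 \<le> v"
  shows "integrable M (\<lambda>\<omega>. (\<epsilon> (2 * u) \<omega> * \<epsilon> (2 * u + 1) \<omega> - \<rho>) * (\<epsilon> (2 * v) \<omega> * \<epsilon> (2 * v + 1) \<omega> - \<rho>))"
proof -
  have "integrable M (\<lambda>\<omega>. \<epsilon> (2 * u) \<omega> * \<epsilon> (2 * u + 1) \<omega> * \<epsilon> (2 * v) \<omega> * \<epsilon> (2 * v + 1) \<omega>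
      - \<rho> * (\<epsilon> (2 * u) \<omega> * \<epsilon> (2 * u + 1) \<omega>) - \<rho> * (\<epsilon> (2 * v) \<omega> * \<epsilon> (2 * v + 1) \<omega>) + \<rho> * \<rho>)"
    using assms by (intro Bochner_Integration.integrable_add Bochner_Integration.integrable_diff
        integrable_eps_prod4 Bochner_Integration.integrable_mult_right integrable_eps_prod2) auto
  then show ?thesis
    by (rule Bochner_Integration.integrable_cong[THEN iffD1, rotated 2]) (auto simp: algebra_simps)
qed

lemma integral_cond_exp_const:
  assumes "integrable M f" "AE \<omega> in M. real_cond_exp M (natF M X n) f \<omega> = r"
  shows "(\<integral>\<omega>. f \<omega> \<partial>M) = r"
proof -
  interpret sigma_finite_subalgebra M "natF M X n" by (rule natF_sigma_finite)
  have "(\<integral>\<omega>. f \<omega> \<partial>M) = (\<integral>\<omega>. real_cond_exp M (natF M X n) f \<omega> \<partial>M)"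
    by (rule real_cond_exp_int(2)[symmetric, OF assms(1)])
  also have "\<dots> = r" using assms(2) by (subst integral_cong_AE[where g = "\<lambda>_. r"]) (auto simp: prob_space)
  finally show ?thesis .
qed

lemma integral_mult_centered:
  assumes \<phi>: "\<phi> \<in> borel_measurable (natF M X n)" and [measurable]: "g \<in> borel_measurable M"
    and "integrable M (\<lambda>\<omega>. \<phi> \<omega> * g \<omega>)"
    and centered: "AE \<omega> in M. real_cond_exp M (natF M X n) g \<omega> = 0"
  shows "(\<integral>\<omega>. \<phi> \<omega> * g \<omega> \<partial>M) = 0"
proof -
  interpret sigma_finite_subalgebra M "natF M X n" by (rule natF_sigma_finite)
  have [measurable]: "\<phi> \<in> borel_measurable M" by (rule measurable_from_subalg[OF subalg \<phi>])
  have "(\<integral>\<omega>. \<phi> \<omega> * g \<omega> \<partial>M) = (\<integral>\<omega>. \<phi> \<omega> * real_cond_exp M (natF M X n) g \<omega> \<partial>M)"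
    by (rule real_cond_exp_intg(2)[symmetric]) (use assms in auto)
  also have "\<dots> = 0"
    using centered by (subst integral_cong_AE[where g = "\<lambda>_. 0"]) auto
  finally show ?thesis .
qed

lemma cond_exp_centered:
  assumes "integrable M f" "AE \<omega> in M. real_cond_exp M (natF M X n) f \<omega> = r"
  shows "AE \<omega> in M. real_cond_exp M (natF M X n) (\<lambda>\<omega>. f \<omega> - r) \<omega> = 0"
proof -
  interpret sigma_finite_subalgebra M "natF M X n" by (rule natF_sigma_finite)
  have "AE \<omega> in M. real_cond_exp M (natF M X n) (\<lambda>\<omega>. f \<omega> - r) \<omega>
      = real_cond_exp M (natF M X n) f \<omega> - real_cond_exp M (natF M X n) (\<lambda>_. r) \<omega>"
    by (rule real_cond_exp_diff) (use assms(1) in auto)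
  moreover have "AE \<omega> in M. real_cond_exp M (natF M X n) (\<lambda>_. r) \<omega> = r"
    by (rule real_cond_exp_F_meas) auto
  ultimately show ?thesis using assms(2) by eventually_elim simp
qed

lemma cond_indep_two:
  assumes "u \<in> Gen n" "v \<in> Gen n" "u \<noteq> v" "A \<in> sets borel" "B \<in> sets borel"
  shows "AE \<omega> in M. real_cond_exp M (natF M X n)
      (\<lambda>\<omega>. indicator A (\<epsilon> (2 * u) \<omega>, \<epsilon> (2 * u + 1) \<omega>) * indicator B (\<epsilon> (2 * v) \<omega>, \<epsilon> (2 * v + 1) \<omega>)) \<omega>
    = real_cond_exp M (natF M X n) (\<lambda>\<omega>. indicator A (\<epsilon> (2 * u) \<omega>, \<epsilon> (2 * u + 1) \<omega>)) \<omega> *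
      real_cond_exp M (natF M X n) (\<lambda>\<omega>. indicator B (\<epsilon> (2 * v) \<omega>, \<epsilon> (2 * v + 1) \<omega>)) \<omega>"
  using cind[of "{u, v}" n "\<lambda>w. if w = u then A else B"] assms by auto

text \<open>If v is
  in an earlier generation its functional is known at u's generation; otherwise the two pairs
  are conditionally independent by (HN.2).\<close>

lemma sibling_pair_orthogonal:
  fixes f :: "real \<times> real \<Rightarrow> real"
  assumes f[measurable]: "f \<in> borel_measurable borel"
    and centered: "\<And>m u. u \<in> Gen m \<Longrightarrow>
      AE \<omega> in M. real_cond_exp M (natF M X m) (\<lambda>\<omega>. f (\<epsilon> (2 * u) \<omega>, \<epsilon> (2 * u + 1) \<omega>)) \<omega> = 0"
    and integrable: "\<And>u. 1 \<le> u \<Longrightarrow> integrable M (\<lambda>\<omega>. f (\<epsilon> (2 * u) \<omega>, \<epsilon> (2 * u + 1) \<omega>))"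
    and integrable_prod: "\<And>u v. 1 \<le> u \<Longrightarrow> 1 \<le> v \<Longrightarrow>
      integrable M (\<lambda>\<omega>. f (\<epsilon> (2 * u) \<omega>, \<epsilon> (2 * u + 1) \<omega>) * f (\<epsilon> (2 * v) \<omega>, \<epsilon> (2 * v + 1) \<omega>))"
    and uv: "1 \<le> u" "1 \<le> v" "u \<noteq> v"
  shows "(\<integral>\<omega>. f (\<epsilon> (2 * u) \<omega>, \<epsilon> (2 * u + 1) \<omega>) * f (\<epsilon> (2 * v) \<omega>, \<epsilon> (2 * v + 1) \<omega>) \<partial>M) = 0"
proof -
  define F where "F u = (\<lambda>\<omega>. f (\<epsilon> (2 * u) \<omega>, \<epsilon> (2 * u + 1) \<omega>))" for u
  have ordered: "(\<integral>\<omega>. F v \<omega> * F u \<omega> \<partial>M) = 0"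
    if u: "u \<in> Gen m" and v: "v \<in> Gen m'" and "m' \<le> m" "u \<noteq> v" for u v m m'
  proof (cases "m' < m")
    case True
    then have "2 * v \<in> Tr m" "2 * v + 1 \<in> Tr m"
      using Gen_children[OF v] Gen_sub_Tr[of "Suc m'" m] by auto
    moreover have "2 \<le> 2 * v" "2 \<le> 2 * v + 1" using Gen_ge1[OF v] by simp_all
    ultimately have "F v \<in> borel_measurable (natF M X m)"
      unfolding F_def using eps_natF_measurable by measurable
    then show ?thesis
      using centered[OF u] integrable_prod Gen_ge1[OF u] Gen_ge1[OF v]
      by (intro integral_mult_centered) (auto simp: F_def)
  next
    case False
    then have "v \<in> Gen m" using v \<open>m' \<le> m\<close> by simp
    have "(\<integral>\<omega>. F u \<omega> * F v \<omega> \<partial>M) = 0"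
      unfolding F_def
    proof (rule cond_indep_orthogonal[OF prob_space_axioms natF_sigma_finite])
      fix A B :: "(real \<times> real) set" assume "A \<in> sets borel" "B \<in> sets borel"
      then show "AE \<omega> in M. real_cond_exp M (natF M X m) (\<lambda>\<omega>. indicator A (\<epsilon> (2 * u) \<omega>, \<epsilon> (2 * u + 1) \<omega>)
          * indicator B (\<epsilon> (2 * v) \<omega>, \<epsilon> (2 * v + 1) \<omega>)) \<omega>
        = real_cond_exp M (natF M X m) (\<lambda>\<omega>. indicator A (\<epsilon> (2 * u) \<omega>, \<epsilon> (2 * u + 1) \<omega>)) \<omega> *
          real_cond_exp M (natF M X m) (\<lambda>\<omega>. indicator B (\<epsilon> (2 * v) \<omega>, \<epsilon> (2 * v + 1) \<omega>)) \<omega>"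
        using cond_indep_two[OF u \<open>v \<in> Gen m\<close> \<open>u \<noteq> v\<close>] by blast
    qed (use centered[OF u] integrable integrable_prod Gen_ge1[OF u] Gen_ge1[OF v] in auto)
    then show ?thesis by (simp add: mult.commute)
  qed
  obtain m m' where u: "u \<in> Gen m" and v: "v \<in> Gen m'"
    using in_Gen_Suc[of "2 * u"] in_Gen_Suc[of "2 * v"] uv Gen_parent by fastforce
  show ?thesis
    using ordered[OF u v] ordered[OF v u] uv(3) by (cases "m' \<le> m") (auto simp: F_def mult.commute)
qed

text \<open>Distinct individuals of the same type carry orthogonal centred squared noises (same type
  excludes siblings, whose noises are correlated).\<close>

lemma noise_sq_orthogonal:
  assumes kl: "2 \<le> k" "2 \<le> l" "k mod 2 = l mod 2" "k \<noteq> l"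
  shows "(\<integral>\<omega>. (\<epsilon> k \<omega> ^ 2 - \<sigma>2) * (\<epsilon> l \<omega> ^ 2 - \<sigma>2) \<partial>M) = 0"
proof -
  define j where "j = k mod 2"
  define f where "f xy = (if j = 0 then fst xy else snd xy) ^ 2 - \<sigma>2" for xy :: "real \<times> real"
  have j01: "j = 0 \<or> j = 1" unfolding j_def by presburger
  have f_pair: "f (\<epsilon> (2 * u) \<omega>, \<epsilon> (2 * u + 1) \<omega>) = \<epsilon> (2 * u + j) \<omega> ^ 2 - \<sigma>2" for u \<omega>
    using j01 by (auto simp: f_def)
  have child: "k = 2 * (k div 2) + j" "l = 2 * (l div 2) + j"
    using kl(3) unfolding j_def by presburger+
  have "(\<integral>\<omega>. f (\<epsilon> (2 * (k div 2)) \<omega>, \<epsilon> (2 * (k div 2) + 1) \<omega>) *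
      f (\<epsilon> (2 * (l div 2)) \<omega>, \<epsilon> (2 * (l div 2) + 1) \<omega>) \<partial>M) = 0"
  proof (rule sibling_pair_orthogonal)
    have "continuous_on UNIV f" unfolding f_def by (cases "j = 0") (auto intro!: continuous_intros)
    then show "f \<in> borel_measurable borel" by (rule borel_measurable_continuous_onI)
  next
    fix m u assume "u \<in> Gen m"
    then have "2 * u + j \<in> Gen (Suc m)" using Gen_children[of u m] j01 by auto
    then show "AE \<omega> in M. real_cond_exp M (natF M X m) (\<lambda>\<omega>. f (\<epsilon> (2 * u) \<omega>, \<epsilon> (2 * u + 1) \<omega>)) \<omega> = 0"
      unfolding f_pair using Gen_Suc_ge2
      by (intro cond_exp_centered[OF integrable_eps_power ce2]) auto
  next
    fix u v :: nat assume "1 \<le> u" "1 \<le> v"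
    then show "integrable M (\<lambda>\<omega>. f (\<epsilon> (2 * u) \<omega>, \<epsilon> (2 * u + 1) \<omega>))"
      "integrable M (\<lambda>\<omega>. f (\<epsilon> (2 * u) \<omega>, \<epsilon> (2 * u + 1) \<omega>) * f (\<epsilon> (2 * v) \<omega>, \<epsilon> (2 * v + 1) \<omega>))"
      unfolding f_pair by (auto intro!: integrable_eps_power integrable_centered_sq_prod)
  qed (use kl child in auto)
  then show ?thesis unfolding f_pair using child by metis
qed

lemma noise_pair_orthogonal:
  assumes "1 \<le> u" "1 \<le> v" "u \<noteq> v"
  shows "(\<integral>\<omega>. (\<epsilon> (2 * u) \<omega> * \<epsilon> (2 * u + 1) \<omega> - \<rho>) * (\<epsilon> (2 * v) \<omega> * \<epsilon> (2 * v + 1) \<omega> - \<rho>) \<partial>M) = 0"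
proof -
  define f where "f xy = fst xy * snd xy - \<rho>" for xy :: "real \<times> real"
  have f_pair: "f (\<epsilon> (2 * u) \<omega>, \<epsilon> (2 * u + 1) \<omega>) = \<epsilon> (2 * u) \<omega> * \<epsilon> (2 * u + 1) \<omega> - \<rho>" for u \<omega>
    by (simp add: f_def)
  have "(\<integral>\<omega>. f (\<epsilon> (2 * u) \<omega>, \<epsilon> (2 * u + 1) \<omega>) * f (\<epsilon> (2 * v) \<omega>, \<epsilon> (2 * v + 1) \<omega>) \<partial>M) = 0"
  proof (rule sibling_pair_orthogonal)
    have "continuous_on UNIV f" unfolding f_def by (auto intro!: continuous_intros)
    then show "f \<in> borel_measurable borel" by (rule borel_measurable_continuous_onI)
  next
    fix m u assume "u \<in> Gen m"
    then show "AE \<omega> in M. real_cond_exp M (natF M X m) (\<lambda>\<omega>. f (\<epsilon> (2 * u) \<omega>, \<epsilon> (2 * u + 1) \<omega>)) \<omega> = 0"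
      unfolding f_pair using Gen_ge1
      by (intro cond_exp_centered[OF integrable_eps_prod2 cc1]) auto
  next
    fix u v :: nat assume "1 \<le> u" "1 \<le> v"
    then show "integrable M (\<lambda>\<omega>. f (\<epsilon> (2 * u) \<omega>, \<epsilon> (2 * u + 1) \<omega>))"
      "integrable M (\<lambda>\<omega>. f (\<epsilon> (2 * u) \<omega>, \<epsilon> (2 * u + 1) \<omega>) * f (\<epsilon> (2 * v) \<omega>, \<epsilon> (2 * v + 1) \<omega>))"
      unfolding f_pair using integrable_eps_prod2 integrable_centered_pair_prod by auto
  qed (use assms in auto)
  then show ?thesis unfolding f_pair .
qed

lemma noise_sq_second_moment:
  assumes k: "2 \<le> k" shows "(\<integral>\<omega>. (\<epsilon> k \<omega> ^ 2 - \<sigma>2)\<^sup>2 \<partial>M) = \<tau>4 - \<sigma>2\<^sup>2"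
proof -
  obtain n where n: "k \<in> Gen (Suc n)" using in_Gen_Suc[OF k] by blast
  have i4: "integrable M (\<lambda>\<omega>. \<epsilon> k \<omega> ^ 4)" and i2: "integrable M (\<lambda>\<omega>. \<epsilon> k \<omega> ^ 2)"
    using integrable_eps_power[OF k] by auto
  have "(\<integral>\<omega>. (\<epsilon> k \<omega> ^ 2 - \<sigma>2)\<^sup>2 \<partial>M) = (\<integral>\<omega>. \<epsilon> k \<omega> ^ 4 - 2 * \<sigma>2 * \<epsilon> k \<omega> ^ 2 + \<sigma>2\<^sup>2 \<partial>M)"
    by (rule Bochner_Integration.integral_cong) (auto simp: power2_eq_square algebra_simps numeral_eq_Suc)
  also have "\<dots> = (\<integral>\<omega>. \<epsilon> k \<omega> ^ 4 \<partial>M) - 2 * \<sigma>2 * (\<integral>\<omega>. \<epsilon> k \<omega> ^ 2 \<partial>M) + \<sigma>2\<^sup>2"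
    using i4 i2 by (simp add: prob_space)
  finally show ?thesis
    using integral_cond_exp_const[OF i4 ce4[OF n]] integral_cond_exp_const[OF i2 ce2[OF n]]
    by (simp add: power2_eq_square)
qed

lemma noise_pair_second_moment:
  assumes u: "1 \<le> u"
  shows "(\<integral>\<omega>. (\<epsilon> (2 * u) \<omega> * \<epsilon> (2 * u + 1) \<omega> - \<rho>)\<^sup>2 \<partial>M) = \<nu>2 * \<tau>4 - \<rho>\<^sup>2"
proof -
  obtain n where n: "u \<in> Gen n" using in_Gen_Suc[of "2 * u"] u Gen_parent by fastforce
  have e: "2 \<le> 2 * u" "2 \<le> 2 * u + 1" using u by auto
  have i4: "integrable M (\<lambda>\<omega>. \<epsilon> (2 * u) \<omega> ^ 2 * \<epsilon> (2 * u + 1) \<omega> ^ 2)"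
    using integrable_eps_prod4[OF e(1) e(1) e(2) e(2)]
    by (simp add: power2_eq_square mult.assoc mult.left_commute)
  have i2: "integrable M (\<lambda>\<omega>. \<epsilon> (2 * u) \<omega> * \<epsilon> (2 * u + 1) \<omega>)" by (rule integrable_eps_prod2[OF e])
  have "(\<integral>\<omega>. (\<epsilon> (2 * u) \<omega> * \<epsilon> (2 * u + 1) \<omega> - \<rho>)\<^sup>2 \<partial>M)
      = (\<integral>\<omega>. \<epsilon> (2 * u) \<omega> ^ 2 * \<epsilon> (2 * u + 1) \<omega> ^ 2 - 2 * \<rho> * (\<epsilon> (2 * u) \<omega> * \<epsilon> (2 * u + 1) \<omega>) + \<rho>\<^sup>2 \<partial>M)"
    by (rule Bochner_Integration.integral_cong) (auto simp: power2_eq_square algebra_simps)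
  also have "\<dots> = (\<integral>\<omega>. \<epsilon> (2 * u) \<omega> ^ 2 * \<epsilon> (2 * u + 1) \<omega> ^ 2 \<partial>M)
      - 2 * \<rho> * (\<integral>\<omega>. \<epsilon> (2 * u) \<omega> * \<epsilon> (2 * u + 1) \<omega> \<partial>M) + \<rho>\<^sup>2"
    using i4 i2 by (simp add: prob_space)
  finally show ?thesis
    using integral_cond_exp_const[OF i4 cc2[OF n]] integral_cond_exp_const[OF i2 cc1[OF n]]
    by (simp add: power2_eq_square)
qed

end

locale bar_observed =
  obs_tree M \<zeta> p \<pi> z + bar_noise M X \<epsilon> a b c d \<sigma>2 \<tau>4 \<rho> \<nu>2
  for M :: "'a measure" and \<zeta> p \<pi> z X \<epsilon> a b c d \<sigma>2 \<tau>4 \<rho> \<nu>2 +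
  assumes HI: "indep_set
      (gen_events M (PiM {1..} (\<lambda>_. count_space (UNIV :: (nat \<times> nat) set)))
         (\<lambda>\<omega>. restrict (\<lambda>k. \<zeta> k \<omega>) {1..}))
      (gen_events M (PiM {1..} (\<lambda>_. borel \<Otimes>\<^sub>M borel))
         (\<lambda>\<omega>. restrict (\<lambda>k. (X k \<omega>, \<epsilon> k \<omega>)) {1..}))"
begin

definition obs_path :: "'a \<Rightarrow> nat \<Rightarrow> nat \<times> nat" where
  "obs_path \<omega> = restrict (\<lambda>k. \<zeta> k \<omega>) {1..}"

definition noise_path :: "'a \<Rightarrow> nat \<Rightarrow> real \<times> real" where
  "noise_path \<omega> = restrict (\<lambda>k. (X k \<omega>, \<epsilon> k \<omega>)) {1..}"

lemma obs_path_measurable [measurable]: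
  "obs_path \<in> measurable M (PiM {1..} (\<lambda>_. count_space UNIV))"
  unfolding obs_path_def by (rule zeta_restrict_measurable) simp

lemma noise_path_measurable [measurable]:
  "noise_path \<in> measurable M (PiM {1..} (\<lambda>_. borel \<Otimes>\<^sub>M borel))"
  unfolding noise_path_def by (rule measurable_restrict) auto

lemma delta_obs_path: "real (delta \<zeta> k \<omega>) = delta_path k (obs_path \<omega>)"
  unfolding obs_path_def by (rule delta_eq_delta_path) auto

lemma eps_noise_path: "1 \<le> k \<Longrightarrow> \<epsilon> k \<omega> = snd (noise_path \<omega> k)"
  unfolding noise_path_def by simp

lemma noise_coordinate_measurable [measurable]:
  "1 \<le> k \<Longrightarrow> (\<lambda>y. snd (y k)) \<in> borel_measurable (PiM {1..} (\<lambda>_. borel \<Otimes>\<^sub>M borel))"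
  by (rule measurable_compose[OF measurable_component_singleton[of k "{1..}"] measurable_snd]) auto

lemma obs_noise_product:
  fixes F :: "(nat \<Rightarrow> nat \<times> nat) \<Rightarrow> real" and G :: "(nat \<Rightarrow> real \<times> real) \<Rightarrow> real"
  assumes [measurable]: "F \<in> borel_measurable (PiM {1..} (\<lambda>_. count_space UNIV))"
      "G \<in> borel_measurable (PiM {1..} (\<lambda>_. borel \<Otimes>\<^sub>M borel))"
    and F_bound: "\<And>\<omega>. \<omega> \<in> space M \<Longrightarrow> \<bar>F (obs_path \<omega>)\<bar> \<le> 1"
    and iG: "integrable M (\<lambda>\<omega>. G (noise_path \<omega>))"
  shows "integrable M (\<lambda>\<omega>. F (obs_path \<omega>) * G (noise_path \<omega>))"
    and "(\<integral>\<omega>. F (obs_path \<omega>) * G (noise_path \<omega>) \<partial>M)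
      = (\<integral>\<omega>. F (obs_path \<omega>) \<partial>M) * (\<integral>\<omega>. G (noise_path \<omega>) \<partial>M)"
proof -
  show "integrable M (\<lambda>\<omega>. F (obs_path \<omega>) * G (noise_path \<omega>))"
    by (rule integrable_mult_bounded_factor[OF iG]) (use F_bound in auto)
  have "integrable M (\<lambda>\<omega>. F (obs_path \<omega>))"
    by (rule integrable_bounded[OF _ F_bound]) measurable
  moreover have "indep_set (gen_events M (PiM {1..} (\<lambda>_. count_space UNIV)) obs_path)
      (gen_events M (PiM {1..} (\<lambda>_. borel \<Otimes>\<^sub>M borel)) noise_path)"
    using HI unfolding obs_path_def[abs_def] noise_path_def[abs_def] .
  ultimately show "(\<integral>\<omega>. F (obs_path \<omega>) * G (noise_path \<omega>) \<partial>M)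
      = (\<integral>\<omega>. F (obs_path \<omega>) \<partial>M) * (\<integral>\<omega>. G (noise_path \<omega>) \<partial>M)"
    using iG prob_space_axioms assms(1,2) obs_path_measurable noise_path_measurable
    by (intro indep_generated_integral[where ?Y1.0 = obs_path and ?Y2.0 = noise_path]) simp_all
qed

lemma obs_noise_negligible:
  fixes F :: "nat \<Rightarrow> (nat \<Rightarrow> nat \<times> nat) \<Rightarrow> real" and G :: "nat \<Rightarrow> (nat \<Rightarrow> real \<times> real) \<Rightarrow> real"
  assumes j: "j \<le> 1"
    and F_meas: "\<And>k. 2 \<le> k \<Longrightarrow> F k \<in> borel_measurable (PiM {1..} (\<lambda>_. count_space UNIV))"
    and F_01: "\<And>k \<omega>. 2 \<le> k \<Longrightarrow> \<omega> \<in> space M \<Longrightarrow> F k (obs_path \<omega>) \<in> {0, 1}"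
    and F_le: "\<And>k \<omega>. 2 \<le> k \<Longrightarrow> \<omega> \<in> space M \<Longrightarrow> F k (obs_path \<omega>) \<le> real (delta \<zeta> k \<omega>)"
    and G_meas: "\<And>k. 2 \<le> k \<Longrightarrow> G k \<in> borel_measurable (PiM {1..} (\<lambda>_. borel \<Otimes>\<^sub>M borel))"
    and G_int: "\<And>k l. 2 \<le> k \<Longrightarrow> 2 \<le> l \<Longrightarrow>
      integrable M (\<lambda>\<omega>. G k (noise_path \<omega>) * G l (noise_path \<omega>))"
    and G_orth: "\<And>k l. k \<in> Ty j \<Longrightarrow> l \<in> Ty j \<Longrightarrow> 2 \<le> k \<Longrightarrow> 2 \<le> l \<Longrightarrow> k \<noteq> l \<Longrightarrow>
      (\<integral>\<omega>. G k (noise_path \<omega>) * G l (noise_path \<omega>) \<partial>M) = 0"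
    and G_sq: "\<And>k. 2 \<le> k \<Longrightarrow> (\<integral>\<omega>. (G k (noise_path \<omega>))\<^sup>2 \<partial>M) = C"
  shows "AE \<omega> in M. (\<lambda>n. (\<Sum>k\<in>Tr_nonroot j n. F k (obs_path \<omega>) * G k (noise_path \<omega>)) / \<pi> ^ n)
    \<longlonglongrightarrow> 0"
proof (rule orthogonal_sum_negligible[OF j, where C = C])
  define U where "U k \<omega> = F k (obs_path \<omega>) * G k (noise_path \<omega>)" for k \<omega>
  have U_prod: "U k \<omega> * U l \<omega> = (\<lambda>x. F k x * F l x) (obs_path \<omega>) * (\<lambda>y. G k y * G l y) (noise_path \<omega>)"
    for k l \<omega> by (simp add: U_def algebra_simps)
  have F_abs: "\<bar>F k (obs_path \<omega>)\<bar> \<le> 1" if "2 \<le> k" "\<omega> \<in> space M" for k \<omega>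
    using F_01[OF that] by auto
  have FF_abs: "\<bar>F k (obs_path \<omega>) * F l (obs_path \<omega>)\<bar> \<le> 1"
    if "2 \<le> k" "2 \<le> l" "\<omega> \<in> space M" for k l \<omega>
    using F_01[OF that(1,3)] F_01[OF that(2,3)] by auto
  have U_factor: "integrable M (\<lambda>\<omega>. U k \<omega> * U l \<omega>)"
    "(\<integral>\<omega>. U k \<omega> * U l \<omega> \<partial>M) = (\<integral>\<omega>. F k (obs_path \<omega>) * F l (obs_path \<omega>) \<partial>M)
      * (\<integral>\<omega>. G k (noise_path \<omega>) * G l (noise_path \<omega>) \<partial>M)"
    if "2 \<le> k" "2 \<le> l" for k l
    unfolding U_prod using F_meas[OF that(1)] F_meas[OF that(2)] G_meas[OF that(1)] G_meas[OF that(2)]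
      FF_abs[OF that] G_int[OF that]
    by (auto intro!: obs_noise_product[where F = "\<lambda>x. F k x * F l x" and G = "\<lambda>y. G k y * G l y"])
  fix k assume k: "k \<in> Ty j"
  show "(\<lambda>\<omega>. F k (obs_path \<omega>) * G k (noise_path \<omega>)) \<in> borel_measurable M" if "2 \<le> k"
    using F_meas[OF that] G_meas[OF that] by measurable
  show "integrable M (\<lambda>\<omega>. F k (obs_path \<omega>) * G k (noise_path \<omega>) * (F l (obs_path \<omega>) * G l (noise_path \<omega>)))"
    if "l \<in> Ty j" "2 \<le> k" "2 \<le> l" for l
    using U_factor(1)[of k l] that by (simp add: U_def)
  show "(\<integral>\<omega>. F k (obs_path \<omega>) * G k (noise_path \<omega>) * (F l (obs_path \<omega>) * G l (noise_path \<omega>)) \<partial>M) = 0"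
    if "l \<in> Ty j" "2 \<le> k" "2 \<le> l" "k \<noteq> l" for l
    using U_factor(2)[of k l] G_orth[OF k] that by (simp add: U_def)
  show "(\<integral>\<omega>. (F k (obs_path \<omega>) * G k (noise_path \<omega>))\<^sup>2 \<partial>M) \<le> C * obs_mean k" if k2: "2 \<le> k"
  proof -
    have F_idem: "F k (obs_path \<omega>) * F k (obs_path \<omega>) = F k (obs_path \<omega>)" if "\<omega> \<in> space M" for \<omega>
      using F_01[OF k2 that] by auto
    have C_nonneg: "0 \<le> C" using G_sq[OF k2] by (metis integral_nonneg_AE zero_le_power2 AE_I2)
    have "(\<integral>\<omega>. (F k (obs_path \<omega>) * G k (noise_path \<omega>))\<^sup>2 \<partial>M) = (\<integral>\<omega>. U k \<omega> * U k \<omega> \<partial>M)"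
      by (simp add: U_def power2_eq_square)
    also have "\<dots> = (\<integral>\<omega>. F k (obs_path \<omega>) * F k (obs_path \<omega>) \<partial>M)
        * (\<integral>\<omega>. G k (noise_path \<omega>) * G k (noise_path \<omega>) \<partial>M)"
      by (rule U_factor(2)[OF k2 k2])
    also have "(\<integral>\<omega>. F k (obs_path \<omega>) * F k (obs_path \<omega>) \<partial>M) = (\<integral>\<omega>. F k (obs_path \<omega>) \<partial>M)"
      by (rule Bochner_Integration.integral_cong) (simp_all add: F_idem)
    also have "(\<integral>\<omega>. G k (noise_path \<omega>) * G k (noise_path \<omega>) \<partial>M) = C"
      using G_sq[OF k2] by (simp add: power2_eq_square)
    also have "(\<integral>\<omega>. F k (obs_path \<omega>) \<partial>M) * C \<le> obs_mean k * C"
    proof (intro mult_right_mono C_nonneg)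
      have "integrable M (\<lambda>\<omega>. F k (obs_path \<omega>))"
        using F_abs[OF k2] measurable_compose[OF obs_path_measurable F_meas[OF k2]]
        by (intro integrable_bounded[where B = 1]) auto
      then show "(\<integral>\<omega>. F k (obs_path \<omega>) \<partial>M) \<le> obs_mean k"
        unfolding obs_mean_def by (rule integral_mono[OF _ integrable_delta]) (rule F_le[OF k2])
    qed
    finally show ?thesis by (simp add: mult.commute)
  qed
qed

lemma noise_sq_negligible:
  assumes j: "j \<le> 1"
  shows "AE \<omega> in M. (\<lambda>n. (\<Sum>k\<in>Tr_nonroot j n. real (delta \<zeta> k \<omega>) * (\<epsilon> k \<omega> ^ 2 - \<sigma>2)) / \<pi> ^ n)
    \<longlonglongrightarrow> 0"
proof -
  define G where "G k y = (snd (y k))\<^sup>2 - \<sigma>2" for k and y :: "nat \<Rightarrow> real \<times> real"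
  have G_noise: "G k (noise_path \<omega>) = \<epsilon> k \<omega> ^ 2 - \<sigma>2" if "2 \<le> k" for k \<omega>
    using that by (simp add: G_def eps_noise_path)
  have "AE \<omega> in M. (\<lambda>n. (\<Sum>k\<in>Tr_nonroot j n. delta_path k (obs_path \<omega>) * G k (noise_path \<omega>)) / \<pi> ^ n)
    \<longlonglongrightarrow> 0"
  proof (rule obs_noise_negligible[OF j, where C = "\<tau>4 - \<sigma>2\<^sup>2"])
    fix k l :: nat assume k: "2 \<le> k"
    show "delta_path k \<in> borel_measurable (PiM {1..} (\<lambda>_. count_space UNIV))"
      by (rule delta_path_measurable) auto
    show "G k \<in> borel_measurable (PiM {1..} (\<lambda>_. borel \<Otimes>\<^sub>M borel))"
      unfolding G_def using k by (intro borel_measurable_diff borel_measurable_power noise_coordinate_measurable) auto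
    show "delta_path k (obs_path \<omega>) \<in> {0, 1}" "delta_path k (obs_path \<omega>) \<le> real (delta \<zeta> k \<omega>)"
      if "\<omega> \<in> space M" for \<omega>
      using delta_01_space[OF that, of k] by (auto simp: delta_obs_path[symmetric])
    show "(\<integral>\<omega>. (G k (noise_path \<omega>))\<^sup>2 \<partial>M) = \<tau>4 - \<sigma>2\<^sup>2"
      using noise_sq_second_moment[OF k] by (simp add: G_noise[OF k])
    assume l: "2 \<le> l"
    show "integrable M (\<lambda>\<omega>. G k (noise_path \<omega>) * G l (noise_path \<omega>))"
      using integrable_centered_sq_prod[OF k l] by (simp add: G_noise k l)
    show "(\<integral>\<omega>. G k (noise_path \<omega>) * G l (noise_path \<omega>) \<partial>M) = 0"
      if "k \<in> Ty j" "l \<in> Ty j" "k \<noteq> l"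
      using noise_sq_orthogonal[OF k l] that by (simp add: G_noise k l Ty_def)
  qed
  then show ?thesis
    by (rule AE_mp, intro AE_I2 impI)
      (simp add: delta_obs_path G_noise Tr_nonroot_ge2 cong: sum.cong)
qed

lemma noise_pair_negligible:
  assumes j: "j \<le> 1"
  shows "AE \<omega> in M. (\<lambda>n. (\<Sum>k\<in>Tr_nonroot j n. real (delta \<zeta> k \<omega>) * both_obs k \<omega> *
      (\<epsilon> (2 * k) \<omega> * \<epsilon> (2 * k + 1) \<omega> - \<rho>)) / \<pi> ^ n) \<longlonglongrightarrow> 0"
proof -
  define F where "F k x = delta_path k x * real (fst (x k) * snd (x k))" for k and x :: "nat \<Rightarrow> nat \<times> nat"
  define G where "G k y = snd (y (2 * k)) * snd (y (2 * k + 1)) - \<rho>" for k and y :: "nat \<Rightarrow> real \<times> real"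
  have F_obs: "F k (obs_path \<omega>) = real (delta \<zeta> k \<omega>) * both_obs k \<omega>" if "2 \<le> k" for k \<omega>
    using that by (simp add: F_def both_obs_def delta_obs_path obs_path_def)
  have G_noise: "G k (noise_path \<omega>) = \<epsilon> (2 * k) \<omega> * \<epsilon> (2 * k + 1) \<omega> - \<rho>" if "2 \<le> k" for k \<omega>
    using that by (simp add: G_def eps_noise_path)
  have "AE \<omega> in M. (\<lambda>n. (\<Sum>k\<in>Tr_nonroot j n. F k (obs_path \<omega>) * G k (noise_path \<omega>)) / \<pi> ^ n)
    \<longlonglongrightarrow> 0"
  proof (rule obs_noise_negligible[OF j, where C = "\<nu>2 * \<tau>4 - \<rho>\<^sup>2"])
    fix k l :: nat assume k: "2 \<le> k"
    have both: "(\<lambda>x. real (fst (x k) * snd (x k))) \<in> borel_measurable (PiM {1..} (\<lambda>_. count_space UNIV))"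
      by (rule measurable_compose[OF measurable_component_singleton]) (use k in auto)
    show "F k \<in> borel_measurable (PiM {1..} (\<lambda>_. count_space UNIV))"
      unfolding F_def by (rule borel_measurable_times[OF delta_path_measurable both]) auto
    show "G k \<in> borel_measurable (PiM {1..} (\<lambda>_. borel \<Otimes>\<^sub>M borel))"
      unfolding G_def using k by (intro borel_measurable_diff borel_measurable_times noise_coordinate_measurable) auto
    show "F k (obs_path \<omega>) \<in> {0, 1}" "F k (obs_path \<omega>) \<le> real (delta \<zeta> k \<omega>)" if "\<omega> \<in> space M" for \<omega>
      using delta_01_space[OF that, of k] both_obs_01[OF that, of k] k by (auto simp: F_obs)
    show "(\<integral>\<omega>. (G k (noise_path \<omega>))\<^sup>2 \<partial>M) = \<nu>2 * \<tau>4 - \<rho>\<^sup>2"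
      using noise_pair_second_moment[of k] k by (simp add: G_noise)
    assume l: "2 \<le> l"
    show "integrable M (\<lambda>\<omega>. G k (noise_path \<omega>) * G l (noise_path \<omega>))"
      using integrable_centered_pair_prod[of k l] k l by (simp add: G_noise)
    show "(\<integral>\<omega>. G k (noise_path \<omega>) * G l (noise_path \<omega>) \<partial>M) = 0" if "k \<noteq> l"
      using noise_pair_orthogonal[of k l] k l that by (simp add: G_noise)
  qed
  then show ?thesis
    by (rule AE_mp, intro AE_I2 impI)
      (simp add: F_obs G_noise Tr_nonroot_ge2 cong: sum.cong)
qed

lemma sq_sum_decomposition:
  "(\<Sum>k\<in>K. \<epsilon> k \<omega> ^ 2 * real (delta \<zeta> k \<omega>))
    = \<sigma>2 * (\<Sum>k\<in>K. real (delta \<zeta> k \<omega>)) + (\<Sum>k\<in>K. real (delta \<zeta> k \<omega>) * (\<epsilon> k \<omega> ^ 2 - \<sigma>2))"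
  by (simp add: sum_distrib_left sum.distrib[symmetric] algebra_simps)

lemma pair_sum_decomposition:
  assumes \<omega>: "\<omega> \<in> space M" and K: "K \<subseteq> Ty i" "\<And>k. k \<in> K \<Longrightarrow> 1 \<le> k"
  shows "(\<Sum>k\<in>K. real (delta \<zeta> (2*k) \<omega> * delta \<zeta> (2*k+1) \<omega>) * \<epsilon> (2*k) \<omega> * \<epsilon> (2*k+1) \<omega>)
    = (\<Sum>k\<in>K. real (delta \<zeta> k \<omega>) * both_obs k \<omega> * (\<epsilon> (2 * k) \<omega> * \<epsilon> (2 * k + 1) \<omega> - \<rho>))
      + \<rho> * (\<Sum>k\<in>K. obs_dev k \<omega>) + \<rho> * p i 1 1 * (\<Sum>k\<in>K. real (delta \<zeta> k \<omega>))"
proof -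
  have "real (delta \<zeta> (2*k) \<omega> * delta \<zeta> (2*k+1) \<omega>) * \<epsilon> (2*k) \<omega> * \<epsilon> (2*k+1) \<omega>
      = real (delta \<zeta> k \<omega>) * both_obs k \<omega> * (\<epsilon> (2 * k) \<omega> * \<epsilon> (2 * k + 1) \<omega> - \<rho>)
        + \<rho> * obs_dev k \<omega> + \<rho> * p i 1 1 * real (delta \<zeta> k \<omega>)" if k: "k \<in> K" for k
  proof -
    have "delta \<zeta> (2*k) \<omega> * delta \<zeta> (2*k+1) \<omega>
        = delta \<zeta> k \<omega> * delta \<zeta> k \<omega> * (fst (\<zeta> k \<omega>) * snd (\<zeta> k \<omega>))"
      unfolding delta_even[OF K(2)[OF k]] delta_odd[OF K(2)[OF k]] by (simp add: ac_simps)
    also have "\<dots> = delta \<zeta> k \<omega> * (fst (\<zeta> k \<omega>) * snd (\<zeta> k \<omega>))"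
      using delta_01_space[OF \<omega>, of k] by auto
    finally have "delta \<zeta> (2*k) \<omega> * delta \<zeta> (2*k+1) \<omega> = delta \<zeta> k \<omega> * (fst (\<zeta> k \<omega>) * snd (\<zeta> k \<omega>))" .
    moreover have "k mod 2 = i" using K(1) k by (auto simp: Ty_def)
    ultimately show ?thesis by (simp add: obs_dev_def both_obs_def algebra_simps)
  qed
  then show ?thesis by (simp add: sum.distrib sum_distrib_left)
qed

theorem observed_sums_limits:
  assumes i: "i \<in> {0, 1}"
    and W_lim: "AE \<omega> in M. \<forall>j\<in>{0,1}. (\<lambda>n. real (Zcount \<zeta> n j \<omega>) / \<pi> ^ n) \<longlonglongrightarrow> W \<omega> * z j"
  shows "AE \<omega> in M.
      (\<lambda>n. (\<Sum>k\<in>Tr n \<inter> Ty i - Tr 0. \<epsilon> k \<omega> ^ 2 * real (delta \<zeta> k \<omega>)) / \<pi> ^ n)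
        \<longlonglongrightarrow> \<sigma>2 * (\<pi> / (\<pi> - 1)) * W \<omega> * z i
    \<and> (\<lambda>n. (\<Sum>k\<in>Tr n \<inter> Ty i - Tr 0.
            real (delta \<zeta> (2*k) \<omega> * delta \<zeta> (2*k+1) \<omega>) * \<epsilon> (2*k) \<omega> * \<epsilon> (2*k+1) \<omega>) / \<pi> ^ n)
        \<longlonglongrightarrow> \<rho> * p i 1 1 * (\<pi> / (\<pi> - 1)) * W \<omega> * z i"
proof -
  have i1: "i \<le> 1" using i by auto
  note negligible = noise_sq_negligible[OF i1] obs_dev_negligible[OF i1] noise_pair_negligible[OF i1]
  from W_lim negligible AE_space show ?thesis
  proof eventually_elim
    case (elim \<omega>)
    let ?S = "\<lambda>f n. (\<Sum>k\<in>Tr_nonroot i n. f k) / \<pi> ^ n"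
    have count: "?S (\<lambda>k. real (delta \<zeta> k \<omega>)) \<longlonglongrightarrow> W \<omega> * z i * (\<pi> / (\<pi> - 1))"
      using elim(1) i by (intro obs_count_limit[OF elim(5)]) auto
    have index: "Tr n \<inter> Ty i - Tr 0 = Tr_nonroot i n" for n
      by (simp add: Tr_nonroot_def)
    have typed: "Tr_nonroot i n \<subseteq> Ty i" for n
      using Tr_nonroot_Ty by blast
    have nonroot: "1 \<le> k" if "k \<in> Tr_nonroot i n" for n k
      using Tr_nonroot_ge2[OF that] by simp
    have "(\<lambda>n. \<sigma>2 * ?S (\<lambda>k. real (delta \<zeta> k \<omega>)) n + ?S (\<lambda>k. real (delta \<zeta> k \<omega>) * (\<epsilon> k \<omega> ^ 2 - \<sigma>2)) n)
        \<longlonglongrightarrow> \<sigma>2 * (W \<omega> * z i * (\<pi> / (\<pi> - 1))) + 0"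
      using count elim(2) by (intro tendsto_intros)
    moreover have "(\<lambda>n. ?S (\<lambda>k. real (delta \<zeta> k \<omega>) * both_obs k \<omega> * (\<epsilon> (2 * k) \<omega> * \<epsilon> (2 * k + 1) \<omega> - \<rho>)) n
        + \<rho> * ?S (\<lambda>k. obs_dev k \<omega>) n + \<rho> * p i 1 1 * ?S (\<lambda>k. real (delta \<zeta> k \<omega>)) n)
        \<longlonglongrightarrow> 0 + \<rho> * 0 + \<rho> * p i 1 1 * (W \<omega> * z i * (\<pi> / (\<pi> - 1)))"
      using count elim(3,4) by (intro tendsto_intros)
    moreover have "(\<Sum>k\<in>Tr_nonroot i n. real (delta \<zeta> (2*k) \<omega> * delta \<zeta> (2*k+1) \<omega>) *
        \<epsilon> (2*k) \<omega> * \<epsilon> (2*k+1) \<omega>) / \<pi> ^ n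
      = ?S (\<lambda>k. real (delta \<zeta> k \<omega>) * both_obs k \<omega> * (\<epsilon> (2 * k) \<omega> * \<epsilon> (2 * k + 1) \<omega> - \<rho>)) n
        + \<rho> * ?S (\<lambda>k. obs_dev k \<omega>) n + \<rho> * p i 1 1 * ?S (\<lambda>k. real (delta \<zeta> k \<omega>)) n" for n
      by (subst pair_sum_decomposition[OF elim(5) typed nonroot]) (simp_all add: add_divide_distrib)
    ultimately show ?case
      unfolding index sq_sum_decomposition by (simp add: add_divide_distrib mult_ac)
  qed
qed

end

text \<open>Lemma 5.5 is the instance of observed_sums_limits; the hypotheses of the paper that this
  argument does not use (moments of \<open>X_1\<close>, eighth conditional moments, bounds on the parameters,
  the explicit Perron root) are simply not passed on.\<close>

theorem lemma5p5:
  fixes M :: "'a measure"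
    and X \<epsilon> :: "nat \<Rightarrow> 'a \<Rightarrow> real"
    and \<zeta> :: "nat \<Rightarrow> 'a \<Rightarrow> nat \<times> nat"
    and p :: "nat \<Rightarrow> nat \<Rightarrow> nat \<Rightarrow> real"
    and a b c d \<sigma>2 \<tau>4 \<kappa>8 \<rho> \<rho>' \<nu>2 lam4 \<pi> :: real
    and z :: "nat \<Rightarrow> real"
    and W :: "'a \<Rightarrow> real"
    and i :: nat
  assumes prob: "prob_space M"
    \<comment> \<open>BAR process\<close>
    and X_meas: "\<And>k. X k \<in> borel_measurable M"
    and eps_meas: "\<And>k. \<epsilon> k \<in> borel_measurable M"
    and X1_L8: "integrable M (\<lambda>\<omega>. X 1 \<omega> ^ 8)"
    and bar0: "\<And>k \<omega>. k \<ge> 1 \<Longrightarrow> \<omega> \<in> space M \<Longrightarrow> X (2*k) \<omega> = a + b * X k \<omega> + \<epsilon> (2*k) \<omega>"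
    and bar1: "\<And>k \<omega>. k \<ge> 1 \<Longrightarrow> \<omega> \<in> space M \<Longrightarrow> X (2*k+1) \<omega> = c + d * X k \<omega> + \<epsilon> (2*k+1) \<omega>"
    and bd: "0 < max \<bar>b\<bar> \<bar>d\<bar>" "max \<bar>b\<bar> \<bar>d\<bar> < 1"
    \<comment> \<open>(HN.1)\<close>
    and params: "\<sigma>2 > 0" "\<tau>4 > 0" "\<kappa>8 > 0" "\<rho> = \<rho>' * \<sigma>2" "\<bar>\<rho>'\<bar> < 1"
      "0 \<le> \<nu>2" "\<nu>2 < 1" "0 \<le> lam4" "lam4 < 1"
    and eps_L8: "\<And>n k. k \<in> Gen (Suc n) \<Longrightarrow> integrable M (\<lambda>\<omega>. \<epsilon> k \<omega> ^ 8)"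
    and ce1: "\<And>n k. k \<in> Gen (Suc n) \<Longrightarrow>
      AE \<omega> in M. real_cond_exp M (natF M X n) (\<epsilon> k) \<omega> = 0"
    and ce2: "\<And>n k. k \<in> Gen (Suc n) \<Longrightarrow>
      AE \<omega> in M. real_cond_exp M (natF M X n) (\<lambda>\<omega>. \<epsilon> k \<omega> ^ 2) \<omega> = \<sigma>2"
    and ce4: "\<And>n k. k \<in> Gen (Suc n) \<Longrightarrow>
      AE \<omega> in M. real_cond_exp M (natF M X n) (\<lambda>\<omega>. \<epsilon> k \<omega> ^ 4) \<omega> = \<tau>4"
    and ce8: "\<And>n k. k \<in> Gen (Suc n) \<Longrightarrow>
      AE \<omega> in M. real_cond_exp M (natF M X n) (\<lambda>\<omega>. \<epsilon> k \<omega> ^ 8) \<omega> = \<kappa>8"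
    and cc1: "\<And>n k. k \<in> Gen n \<Longrightarrow>
      AE \<omega> in M. real_cond_exp M (natF M X n) (\<lambda>\<omega>. \<epsilon> (2*k) \<omega> * \<epsilon> (2*k+1) \<omega>) \<omega> = \<rho>"
    and cc2: "\<And>n k. k \<in> Gen n \<Longrightarrow>
      AE \<omega> in M. real_cond_exp M (natF M X n)
        (\<lambda>\<omega>. \<epsilon> (2*k) \<omega> ^ 2 * \<epsilon> (2*k+1) \<omega> ^ 2) \<omega> = \<nu>2 * \<tau>4"
    and cc4: "\<And>n k. k \<in> Gen n \<Longrightarrow>
      AE \<omega> in M. real_cond_exp M (natF M X n)
        (\<lambda>\<omega>. \<epsilon> (2*k) \<omega> ^ 4 * \<epsilon> (2*k+1) \<omega> ^ 4) \<omega> = lam4 * \<kappa>8"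
    \<comment> \<open>(HN.2): conditional independence of the pairs given F_n\<close>
    and cind: (* conditional independence of a family = of each finite subfamily *) "\<And>n J B. J \<subseteq> Gen n \<Longrightarrow> (\<And>k. k \<in> J \<Longrightarrow> B k \<in> sets (borel :: (real \<times> real) measure)) \<Longrightarrow>
      AE \<omega> in M. real_cond_exp M (natF M X n)
          (\<lambda>\<omega>. \<Prod>k\<in>J. indicator (B k) (\<epsilon> (2*k) \<omega>, \<epsilon> (2*k+1) \<omega>)) \<omega>
        = (\<Prod>k\<in>J. real_cond_exp M (natF M X n)
             (\<lambda>\<omega>. indicator (B k) (\<epsilon> (2*k) \<omega>, \<epsilon> (2*k+1) \<omega>)) \<omega>)"
    \<comment> \<open>observation process\<close>
    and zeta_val: "\<And>k \<omega>. \<omega> \<in> space M \<Longrightarrow> \<zeta> k \<omega> \<in> {0,1} \<times> {0,1}"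
    and zeta_indep: "prob_space.indep_vars M (\<lambda>_. count_space UNIV) \<zeta> {1..}"
    and zeta_law: "\<And>k j0 j1. k \<ge> 1 \<Longrightarrow>
      measure M {\<omega> \<in> space M. \<zeta> k \<omega> = (j0, j1)} = p (k mod 2) j0 j1"
    \<comment> \<open>(HO)\<close>
    and P_pos: "\<And>i' (j::nat). i' \<le> 1 \<Longrightarrow> j \<le> 1 \<Longrightarrow>
      0 < (if j = 0 then p i' 1 0 + p i' 1 1 else p i' 0 1 + p i' 1 1)"
    and pi_def: "\<pi> = perron_eig (p 0 1 0 + p 0 1 1) (p 0 0 1 + p 0 1 1)
                                (p 1 1 0 + p 1 1 1) (p 1 0 1 + p 1 1 1)"
    and pi_gt1: "\<pi> > 1"
    and z_pos: "z 0 > 0" "z 1 > 0" "z 0 + z 1 = 1"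
    and z_eig0: "z 0 * (p 0 1 0 + p 0 1 1) + z 1 * (p 1 1 0 + p 1 1 1) = \<pi> * z 0"
    and z_eig1: "z 0 * (p 0 0 1 + p 0 1 1) + z 1 * (p 1 0 1 + p 1 1 1) = \<pi> * z 1"
    \<comment> \<open>(HI)\<close>
    and HI: "prob_space.indep_set M
      (gen_events M (PiM {1..} (\<lambda>_. count_space (UNIV :: (nat \<times> nat) set)))
         (\<lambda>\<omega>. restrict (\<lambda>k. \<zeta> k \<omega>) {1..}))
      (gen_events M (PiM {1..} (\<lambda>_. borel \<Otimes>\<^sub>M borel))
         (\<lambda>\<omega>. restrict (\<lambda>k. (X k \<omega>, \<epsilon> k \<omega>)) {1..}))"
    \<comment> \<open>the limit variable W\<close>
    and W_meas: "W \<in> borel_measurable M"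
    and W_nonneg: "\<And>\<omega>. \<omega> \<in> space M \<Longrightarrow> W \<omega> \<ge> 0"
    and W_lim: "AE \<omega> in M. \<forall>j\<in>{0,1}.
      (\<lambda>n. real (Zcount \<zeta> n j \<omega>) / \<pi> ^ n) \<longlonglongrightarrow> W \<omega> * z j"
    and i01: "i \<in> {0, 1}"
  shows "AE \<omega> in M.
      (\<lambda>n. (\<Sum>k\<in>Tr n \<inter> Ty i - Tr 0. \<epsilon> k \<omega> ^ 2 * real (delta \<zeta> k \<omega>)) / \<pi> ^ n)
        \<longlonglongrightarrow> \<sigma>2 * (\<pi> / (\<pi> - 1)) * W \<omega> * z i
    \<and> (\<lambda>n. (\<Sum>k\<in>Tr n \<inter> Ty i - Tr 0.
            real (delta \<zeta> (2*k) \<omega> * delta \<zeta> (2*k+1) \<omega>) * \<epsilon> (2*k) \<omega> * \<epsilon> (2*k+1) \<omega>) / \<pi> ^ n)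
        \<longlonglongrightarrow> \<rho> * p i 1 1 * (\<pi> / (\<pi> - 1)) * W \<omega> * z i"
proof -
  interpret bar_observed M \<zeta> p \<pi> z X \<epsilon> a b c d \<sigma>2 \<tau>4 \<rho> \<nu>2
    by (intro bar_observed.intro obs_tree.intro bar_noise.intro obs_tree_axioms.intro
        bar_noise_axioms.intro bar_observed_axioms.intro) (fact assms)+
  show ?thesis by (rule observed_sums_limits[OF i01 W_lim])
qed

end
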